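(* Assume $T$ is locally finite, let $\nu$ be a positive Borel measure on $\partial T$ with $0<\nu(\partial T_x)<\infty$ for all $x\in T$, and let $\sigma$ be a positive measure on $T$. The following are equivalent: (i) $\sigma$ is a Carleson measure; (ii) for every $p\in(1,\infty)$ there is $C_p>0$ with $\|\mathcal Pf\|_{L^p(T,\sigma)}\le C_p\|f\|_{L^p(\partial T,\nu)}$ for all $f\in L^p(\partial T,\nu)$, and there is $C>0$ with $\|\mathcal Pf\|_{L^{1,\infty}(T,\sigma)}\le C\|f\|_{L^1(\partial T,\nu)}$ for all $f\in L^1(\partial T,\nu)$; (iii) for every $p\in(1,\infty)$ there is $C_p>0$ with $\|\mathcal Pf\|_{L^p(T,\sigma)}\le C_p\|\mathcal Pf\|_{H^p}$ for all $f\in L^p(\partial T,\nu)$.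
   Context: Let $T$ be a tree, identified with its vertex set, with graph distance $d$; $x\sim y$ means $d(x,y)=1$. Let $\Omega$ be the boundary (space of ends) of $T$; fix $\omega_*\in\Omega$ and set $\partial T=\Omega\setminus\{\omega_*\}$. For $x\in T$, $[x,\omega_* )$ is the geodesic ray from $x$ to $\omega_*$; for $\omega\in\partial T$, $(\omega,\omega_* )$ is the doubly infinite geodesic joining $\omega$ and $\omega_*$. For $y\in T$ write $x\le y$ if either $x\in T$ and $y\in[x,\omega_* )$, or $x\in\partial T$ and $y\in(x,\omega_* )$. Fix $o\in T$ and let $(x_j)_{j\ge0}$ enumerate $[o,\omega_* )$ with $x_0=o$, $x_j\sim x_{j+1}$; the level of $x\in T$ is $\ell(x)=\lim_{j\to\infty}(j-d(x,x_j))$. Sectors: $T_x=\{y\in T:y\le x\}$, $\partial T_x=\{\omega\in\partial T:\omega\le x\}$. $m_\nu(x)=\nu(\partial T_x)$. A positive measure on $T$ is a nonnegative function $\sigma$ on the vertices with $\sigma(E)=\sum_{x\in E}\sigma(x)$; $\|F\|_{L^{1,\infty}(T,\sigma)}=\sup_{\lambda>0}\lambda\,\sigma(\{x:|F(x)|>\lambda\})$. $\sigma$ is a Carleson measure if there is $C>0$ with $\sigma(T_x)\le C\nu(\partial T_x)$ for all $x\in T$. The Poisson integral is $\mathcal Pf(x)=\frac{1}{m_\nu(x)}\int_{\partial T_x}f\,d\nu$. The Laplacian is $\Delta F(x)=F(x)-\sum_{y\sim x,\ \ell(y)=\ell(x)-1}F(y)\frac{m_\nu(y)}{m_\nu(x)}$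 and $F$ is harmonic if $\Delta F\equiv0$; for harmonic $F$ and $1\le p<\infty$, $\|F\|_{H^p}^p=\sup_{k\in\mathbb Z}\sum_{\ell(x)=k}|F(x)|^pm_\nu(x)$ ($\mathcal Pf$ is harmonic). *)

theory Defs
  imports "HOL-Analysis.Analysis"
begin

text \<open>A tree is given by a symmetric irreflexive adjacency relation E on the vertex
type 'v (the tree is identified with its vertex set, i.e. all of 'v), in which any
two vertices are joined by exactly one path (connected and acyclic).\<close>

definition walk :: "('v \<Rightarrow> 'v \<Rightarrow> bool) \<Rightarrow> 'v list \<Rightarrow> bool" where
  "walk E xs \<longleftrightarrow> xs \<noteq> [] \<and> (\<forall>i. Suc i < length xs \<longrightarrow> E (xs ! i) (xs ! Suc i))"

definition is_path :: "('v \<Rightarrow> 'v \<Rightarrow> bool) \<Rightarrow> 'v list \<Rightarrow> bool" where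
  "is_path E xs \<longleftrightarrow> walk E xs \<and> distinct xs"

definition is_tree :: "('v \<Rightarrow> 'v \<Rightarrow> bool) \<Rightarrow> bool" where
  "is_tree E \<longleftrightarrow> (\<forall>x y. E x y \<longrightarrow> E y x) \<and> (\<forall>x. \<not> E x x) \<and>
     (\<forall>x y. \<exists>!p. is_path E p \<and> hd p = x \<and> last p = y)"

definition locally_finite :: "('v \<Rightarrow> 'v \<Rightarrow> bool) \<Rightarrow> bool" where
  "locally_finite E \<longleftrightarrow> (\<forall>x. finite {y. E x y})"

definition tree_dist :: "('v \<Rightarrow> 'v \<Rightarrow> bool) \<Rightarrow> 'v \<Rightarrow> 'v \<Rightarrow> nat" where
  "tree_dist E x y = (LEAST n. \<exists>p. walk E p \<and> hd p = x \<and> last p = y \<and> length p = Suc n)"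

definition ray :: "('v \<Rightarrow> 'v \<Rightarrow> bool) \<Rightarrow> (nat \<Rightarrow> 'v) \<Rightarrow> bool" where
  "ray E r \<longleftrightarrow> (\<forall>n. E (r n) (r (Suc n))) \<and> inj r"

definition same_end :: "(nat \<Rightarrow> 'v) \<Rightarrow> (nat \<Rightarrow> 'v) \<Rightarrow> bool" where
  "same_end r s \<longleftrightarrow> (\<exists>k m. \<forall>n. r (n + k) = s (n + m))"

text \<open>Ends of T are represented by their unique geodesic ray starting at the base
point base = o. The distinguished end \<omega>_* is represented by the ray ws = (x_j)
with ws 0 = o. \<partial>T = \<Omega> \ {\<omega>_*}.\<close>
definition bdry :: "('v \<Rightarrow> 'v \<Rightarrow> bool) \<Rightarrow> 'v \<Rightarrow> (nat \<Rightarrow> 'v) \<Rightarrow> (nat \<Rightarrow> 'v) set" where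
  "bdry E base ws = {r. ray E r \<and> r 0 = base \<and> \<not> same_end r ws}"

definition vle :: "('v \<Rightarrow> 'v \<Rightarrow> bool) \<Rightarrow> (nat \<Rightarrow> 'v) \<Rightarrow> 'v \<Rightarrow> 'v \<Rightarrow> bool" where
  "vle E ws x y \<longleftrightarrow> (\<exists>r. ray E r \<and> r 0 = x \<and> same_end r ws \<and> y \<in> range r)"

definition ble :: "('v \<Rightarrow> 'v \<Rightarrow> bool) \<Rightarrow> (nat \<Rightarrow> 'v) \<Rightarrow> (nat \<Rightarrow> 'v) \<Rightarrow> 'v \<Rightarrow> bool" where
  "ble E ws \<omega> y \<longleftrightarrow> (\<exists>g :: int \<Rightarrow> 'v. (\<forall>n. E (g n) (g (n + 1))) \<and> inj g \<and>
      same_end (\<lambda>n. g (- int n)) \<omega> \<and> same_end (\<lambda>n. g (int n)) ws \<and> y \<in> range g)"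

definition sectorT :: "('v \<Rightarrow> 'v \<Rightarrow> bool) \<Rightarrow> (nat \<Rightarrow> 'v) \<Rightarrow> 'v \<Rightarrow> 'v set" where
  "sectorT E ws x = {y. vle E ws y x}"

definition sectorB :: "('v \<Rightarrow> 'v \<Rightarrow> bool) \<Rightarrow> 'v \<Rightarrow> (nat \<Rightarrow> 'v) \<Rightarrow> 'v \<Rightarrow> (nat \<Rightarrow> 'v) set" where
  "sectorB E base ws x = {\<omega> \<in> bdry E base ws. ble E ws \<omega> x}"

definition level :: "('v \<Rightarrow> 'v \<Rightarrow> bool) \<Rightarrow> (nat \<Rightarrow> 'v) \<Rightarrow> 'v \<Rightarrow> int" where
  "level E ws x = (THE k. \<forall>\<^sub>F j in sequentially. int j - int (tree_dist E x (ws j)) = k)"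

definition m_nu :: "('v \<Rightarrow> 'v \<Rightarrow> bool) \<Rightarrow> 'v \<Rightarrow> (nat \<Rightarrow> 'v) \<Rightarrow> (nat \<Rightarrow> 'v) measure \<Rightarrow> 'v \<Rightarrow> real" where
  "m_nu E base ws \<nu> x = measure \<nu> (sectorB E base ws x)"

definition poisson :: "('v \<Rightarrow> 'v \<Rightarrow> bool) \<Rightarrow> 'v \<Rightarrow> (nat \<Rightarrow> 'v) \<Rightarrow> (nat \<Rightarrow> 'v) measure
    \<Rightarrow> ((nat \<Rightarrow> 'v) \<Rightarrow> real) \<Rightarrow> 'v \<Rightarrow> real" where
  "poisson E base ws \<nu> f x =
     (1 / m_nu E base ws \<nu> x) * (LINT \<omega>:sectorB E base ws x|\<nu>. f \<omega>)"

text \<open>A positive measure on T is a nonnegative function \<sigma>; \<sigma>(A) = \<Sum>_{x\<in>A} \<sigma>(x).\<close>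
definition measT :: "('v \<Rightarrow> real) \<Rightarrow> 'v set \<Rightarrow> ennreal" where
  "measT \<sigma> A = (\<integral>\<^sup>+ x. ennreal (\<sigma> x) \<partial>count_space A)"

definition carleson :: "('v \<Rightarrow> 'v \<Rightarrow> bool) \<Rightarrow> 'v \<Rightarrow> (nat \<Rightarrow> 'v) \<Rightarrow> (nat \<Rightarrow> 'v) measure
    \<Rightarrow> ('v \<Rightarrow> real) \<Rightarrow> bool" where
  "carleson E base ws \<nu> \<sigma> \<longleftrightarrow>
     (\<exists>C>0. \<forall>x. measT \<sigma> (sectorT E ws x) \<le> ennreal C * emeasure \<nu> (sectorB E base ws x))"

text \<open>p-th powers of L^p norms (valued in [0,\<infinity>]).\<close>
definition LpT_pow :: "('v \<Rightarrow> real) \<Rightarrow> real \<Rightarrow> ('v \<Rightarrow> real) \<Rightarrow> ennreal" where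
  "LpT_pow \<sigma> p F = (\<integral>\<^sup>+ x. ennreal (\<bar>F x\<bar> powr p * \<sigma> x) \<partial>count_space UNIV)"

definition Lp_pow :: "'a measure \<Rightarrow> real \<Rightarrow> ('a \<Rightarrow> real) \<Rightarrow> ennreal" where
  "Lp_pow M p f = (\<integral>\<^sup>+ x. ennreal (\<bar>f x\<bar> powr p) \<partial>M)"

definition in_Lp :: "'a measure \<Rightarrow> real \<Rightarrow> ('a \<Rightarrow> real) \<Rightarrow> bool" where
  "in_Lp M p f \<longleftrightarrow> f \<in> borel_measurable M \<and> Lp_pow M p f < \<infinity>"

definition weakL1T :: "('v \<Rightarrow> real) \<Rightarrow> ('v \<Rightarrow> real) \<Rightarrow> ennreal" where
  "weakL1T \<sigma> F = (SUP t\<in>{0<..}. ennreal t * measT \<sigma> {x. \<bar>F x\<bar> > t})"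

definition Hp_pow :: "('v \<Rightarrow> 'v \<Rightarrow> bool) \<Rightarrow> 'v \<Rightarrow> (nat \<Rightarrow> 'v) \<Rightarrow> (nat \<Rightarrow> 'v) measure
    \<Rightarrow> real \<Rightarrow> ('v \<Rightarrow> real) \<Rightarrow> ennreal" where
  "Hp_pow E base ws \<nu> p F = (SUP k::int. \<integral>\<^sup>+ x. ennreal (\<bar>F x\<bar> powr p * m_nu E base ws \<nu> x)
       \<partial>count_space {x. level E ws x = k})"

end

theory Submission
  imports Defs
begin

text \<open>Orient \<open>T\<close> towards \<open>\<omega>\<^sub>*\<close>. Then \<open>\<le>\<close> is a forest order on the vertices, and the sectors
  \<open>\<partial>T\<^sub>x\<close> are nested along it and disjoint for incomparable vertices. Since \<open>\<P>f(x)\<close> is the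
  average of \<open>f\<close> over \<open>\<partial>T\<^sub>x\<close>, the vertices where \<open>|\<P>f| > \<lambda>\<close> are covered by the maximal ones,
  whose sectors are disjoint, and the Carleson condition gives the weak type \<open>(1,1)\<close> bound.
  Applying this to the part of \<open>f\<close> above \<open>\<lambda>/2\<close> and summing over dyadic \<open>\<lambda>\<close> gives the
  \<open>L\<^sup>p\<close> bound. The \<open>H\<^sup>p\<close> bound is the same argument on each level \<open>k\<close>: there \<open>\<partial>T\<close> is replaced
  by the vertices of level \<open>k\<close> weighted by \<open>m\<^sub>\<nu>\<close>, because \<open>\<P>f(x)\<close> is the \<open>m\<^sub>\<nu>\<close>-weighted
  average of \<open>\<P>f\<close> over the descendants of \<open>x\<close> at level \<open>k\<close>. Conversely, the test functions
  \<open>f = 1\<^bsub>\<partial>T\<^sub>x\<^esub>\<close> have \<open>\<P>f = 1\<close> on \<open>T\<^sub>x\<close> and squared \<open>H\<^sup>2\<close> norm at most \<open>\<nu>(\<partial>T\<^sub>x)\<close>, which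
  recovers the Carleson condition from either estimate.\<close>

section \<open>Paths and rays in a tree\<close>

lemma walk_Cons2: "walk E (x # y # xs) \<longleftrightarrow> E x y \<and> walk E (y # xs)"
  unfolding walk_def by (auto simp: nth_Cons' less_Suc_eq_0_disj Suc_less_eq2 split: if_splits)

lemma walk_drop: "walk E p \<Longrightarrow> n < length p \<Longrightarrow> walk E (drop n p)"
  unfolding walk_def by (auto simp: add.commute)

lemma walk_shorten_to_path:
  "walk E p \<Longrightarrow> \<exists>q. is_path E q \<and> hd q = hd p \<and> last q = last p \<and> length q \<le> length p"
proof (induction p)
  case Nil then show ?case by (simp add: walk_def)
next
  case (Cons x xs)
  show ?case
  proof (cases xs)
    case Nil then show ?thesis by (intro exI[of _ "[x]"]) (simp add: is_path_def walk_def)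
  next
    case (Cons y ys)
    with Cons.prems have exy: "E x y" and wxs: "walk E xs" by (auto simp: walk_Cons2)
    from Cons.IH[OF wxs] obtain q where q: "is_path E q" "hd q = hd xs" "last q = last xs"
      "length q \<le> length xs" by blast
    have qne: "q \<noteq> []" using q(1) by (simp add: is_path_def walk_def)
    show ?thesis
    proof (cases "x \<in> set q")
      case True
      then obtain q1 q2 where qs: "q = q1 @ x # q2" by (meson split_list)
      have "drop (length q1) q = x # q2" using qs by simp
      moreover have "walk E (drop (length q1) q)" using q(1) qs
        by (intro walk_drop) (auto simp: is_path_def)
      ultimately have "is_path E (x # q2)" using q(1) qs by (auto simp: is_path_def)
      moreover have "last (x # q2) = last q" using qs by simp
      ultimately show ?thesis using q qs \<open>xs = y # ys\<close> by (intro exI[of _ "x # q2"]) auto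
    next
      case False
      have "q = hd q # tl q" using qne by simp
      then have "walk E (x # q)" using q(1) exy q(2) \<open>xs = y # ys\<close>
        by (metis is_path_def list.sel(1) walk_Cons2)
      then have "is_path E (x # q)" using False q(1) by (simp add: is_path_def)
      then show ?thesis using q qne \<open>xs = y # ys\<close> by (intro exI[of _ "x # q"]) auto
    qed
  qed
qed

lemma tree_path_unique:
  assumes "is_tree E" "is_path E p" "is_path E q" "hd p = hd q" "last p = last q"
  shows "p = q"
proof -
  have "\<exists>!p. is_path E p \<and> hd p = hd q \<and> last p = last q"
    using assms(1) unfolding is_tree_def by blast
  then show ?thesis using assms(2-5) by blast
qed

lemma tree_dist_path:
  assumes tr: "is_tree E" and q: "is_path E q"
  shows "tree_dist E (hd q) (last q) = length q - 1"
  unfolding tree_dist_def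
proof (rule Least_equality)
  have "q \<noteq> []" using q by (simp add: is_path_def walk_def)
  then show "\<exists>p. walk E p \<and> hd p = hd q \<and> last p = last q \<and> length p = Suc (length q - 1)"
    using q by (intro exI[of _ q]) (auto simp: is_path_def)
next
  fix n assume "\<exists>p. walk E p \<and> hd p = hd q \<and> last p = last q \<and> length p = Suc n"
  then obtain p where p: "walk E p" "hd p = hd q" "last p = last q" "length p = Suc n" by blast
  from walk_shorten_to_path[OF p(1)] obtain q' where q': "is_path E q'" "hd q' = hd p" "last q' = last p"
    "length q' \<le> length p" by blast
  have "q' = q" using tree_path_unique[OF tr q'(1) q] q' p by simp
  then show "length q - 1 \<le> n" using q' p by simp
qed

lemma ray_prefix_path:
  assumes "ray E r"
  shows "is_path E (map r [0..<Suc k])" "hd (map r [0..<Suc k]) = r 0"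
    "last (map r [0..<Suc k]) = r k"
proof -
  show "is_path E (map r [0..<Suc k])"
    unfolding is_path_def walk_def using assms
    by (auto simp: ray_def distinct_map nth_append inj_on_def simp del: upt_Suc)
  show "hd (map r [0..<Suc k]) = r 0" by (simp add: hd_map del: upt_Suc)
  show "last (map r [0..<Suc k]) = r k" by simp
qed

lemma same_end_sym: "same_end r s \<Longrightarrow> same_end s r"
  unfolding same_end_def by metis

lemma same_end_trans: "same_end r s \<Longrightarrow> same_end s t \<Longrightarrow> same_end r t"
proof -
  assume "same_end r s" "same_end s t"
  then obtain k m k' m' where a: "\<And>n. r (n + k) = s (n + m)" and b: "\<And>n. s (n + k') = t (n + m')"
    unfolding same_end_def by blast
  have "r (n + (k + k')) = t (n + (m + m'))" for n
  proof -
    have "r (n + (k + k')) = r ((n + k') + k)" by (simp add: ac_simps)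
    also have "\<dots> = s ((n + k') + m)" by (rule a)
    also have "\<dots> = s ((n + m) + k')" by (simp add: ac_simps)
    also have "\<dots> = t ((n + m) + m')" using b by simp
    finally show ?thesis by (simp add: ac_simps)
  qed
  then show "same_end r t" unfolding same_end_def by blast
qed

lemma same_end_shift: "same_end (\<lambda>n. r (n + c)) r"
  unfolding same_end_def by (rule exI[of _ 0], rule exI[of _ c]) simp

lemma map_upt_Suc_nth: "i \<le> k \<Longrightarrow> map r [0..<Suc k] ! i = r i"
  by (simp del: upt_Suc)

lemma ray_shift: "ray E r \<Longrightarrow> ray E (\<lambda>n. r (n + c))"
  unfolding ray_def inj_def by (metis add_Suc add_right_cancel)

lemma ray_prepend_path:
  assumes p: "is_path E p" and s: "ray E s" and i0: "i0 < length p" "p ! i0 = s 0"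
    and avoid: "\<And>i. i < i0 \<Longrightarrow> p ! i \<notin> range s"
  shows "ray E (\<lambda>n. if n < i0 then p ! n else s (n - i0))"
    (is "ray E ?r")
proof -
  have edge: "E (p ! i) (p ! Suc i)" if "Suc i < length p" for i
    using p that by (simp add: is_path_def walk_def)
  have "E (?r n) (?r (Suc n))" for n
  proof (cases "Suc n < i0")
    case True then show ?thesis using edge[of n] i0 by simp
  next
    case False
    then consider "Suc n = i0" | "i0 \<le> n" by linarith
    then show ?thesis
    proof cases
      case 1 then show ?thesis using edge[of n] i0 by auto
    next
      case 2
      then have "Suc n - i0 = Suc (n - i0)" by simp
      then show ?thesis using s 2 by (simp add: ray_def)
    qed
  qed
  moreover have "inj ?r"
  proof (rule injI)
    fix a b assume ab: "?r a = ?r b"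
    have "distinct p" "inj s" using p s by (simp_all add: is_path_def ray_def)
    then show "a = b"
      using ab avoid[of a] avoid[of b] i0
      by (auto simp: nth_eq_iff_index_eq inj_eq split: if_splits) (metis rangeI)+
  qed
  ultimately show ?thesis by (simp add: ray_def)
qed

section \<open>The tree oriented towards the distinguished end\<close>

locale tree_end =
  fixes E :: "'v \<Rightarrow> 'v \<Rightarrow> bool" and ws :: "nat \<Rightarrow> 'v"
  assumes tree: "is_tree E" and ws_ray: "ray E ws"
begin

lemma ray_eqI:
  assumes r: "ray E r" and s: "ray E s" and r0: "r 0 = s 0" and se: "same_end r s"
  shows "r = s"
proof -
  obtain k m where km: "\<And>n. r (n + k) = s (n + m)" using se unfolding same_end_def by blast
  let ?P = "map r [0..<Suc k]" let ?Q = "map s [0..<Suc m]"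
  have PQ: "?P = ?Q"
    apply (rule tree_path_unique[OF tree ray_prefix_path(1)[OF r] ray_prefix_path(1)[OF s]])
    using r0 km[of 0] ray_prefix_path(2,3)[OF r, of k] ray_prefix_path(2,3)[OF s, of m] by (simp_all del: upt_Suc)
  have "length ?P = length ?Q" using PQ by simp
  hence km': "k = m" by (simp del: upt_Suc)
  have le: "r i = s i" if "i \<le> k" for i
  proof -
    have "?P ! i = ?Q ! i" using PQ by simp
    thus ?thesis using that km' map_upt_Suc_nth[of i k r] map_upt_Suc_nth[of i m s] by simp
  qed
  show ?thesis
  proof
    fix i show "r i = s i"
    proof (cases "i \<le> k")
      case True then show ?thesis by (rule le)
    next
      case False
      then have "r i = r ((i - k) + k)" by simp
      also have "\<dots> = s ((i - k) + m)" by (rule km)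
      also have "\<dots> = s i" using False km' by simp
      finally show ?thesis .
    qed
  qed
qed

lemma ex_ray_to_end: "\<exists>r. ray E r \<and> r 0 = x \<and> same_end r ws"
proof -
  obtain p where p: "is_path E p" "hd p = x" "last p = ws 0"
    using tree unfolding is_tree_def by blast
  have pne: "p \<noteq> []" using p(1) by (simp add: is_path_def walk_def)
  define i0 where "i0 = (LEAST i. i < length p \<and> p ! i \<in> range ws)"
  have "length p - 1 < length p \<and> p ! (length p - 1) \<in> range ws"
    using pne p(3) by (simp add: last_conv_nth)
  then have i0: "i0 < length p \<and> p ! i0 \<in> range ws"
    unfolding i0_def by (rule LeastI)
  have avoid: "p ! i \<notin> range ws" if "i < i0" for i
    using that i0 not_less_Least[of i "\<lambda>i. i < length p \<and> p ! i \<in> range ws"]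
    unfolding i0_def by auto
  obtain m where m: "p ! i0 = ws m" using i0 by blast
  define r where "r n = (if n < i0 then p ! n else ws (n - i0 + m))" for n
  have "ray E r"
    unfolding r_def by (rule ray_prepend_path[OF p(1) ray_shift[OF ws_ray]]) (use i0 m avoid in auto)
  moreover have "r 0 = x"
    using p(2) pne m by (cases "i0 = 0") (simp_all add: r_def hd_conv_nth)
  moreover have "same_end r ws" unfolding same_end_def
    by (rule exI[of _ i0], rule exI[of _ m]) (simp add: r_def)
  ultimately show ?thesis by blast
qed

definition ray_to_end :: "'v \<Rightarrow> nat \<Rightarrow> 'v" where
  "ray_to_end x = (THE r. ray E r \<and> r 0 = x \<and> same_end r ws)"

lemma ex1_ray_to_end: "\<exists>!r. ray E r \<and> r 0 = x \<and> same_end r ws"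
proof -
  obtain r where r: "ray E r \<and> r 0 = x \<and> same_end r ws" using ex_ray_to_end by blast
  moreover have "s = r" if "ray E s \<and> s 0 = x \<and> same_end s ws" for s
    using that r by (intro ray_eqI) (auto intro: same_end_trans same_end_sym)
  ultimately show ?thesis by blast
qed

lemma ray_to_end: "ray E (ray_to_end x)" "ray_to_end x 0 = x" "same_end (ray_to_end x) ws"
  using theI'[OF ex1_ray_to_end[of x]] unfolding ray_to_end_def by auto

lemma ray_to_end_unique: "ray E r \<Longrightarrow> r 0 = x \<Longrightarrow> same_end r ws \<Longrightarrow> r = ray_to_end x"
  using ex1_ray_to_end[of x] ray_to_end[of x] by blast

definition parent :: "'v \<Rightarrow> 'v" where "parent x = ray_to_end x 1"

lemma ray_to_end_shift: "ray_to_end (ray_to_end x k) = (\<lambda>n. ray_to_end x (n + k))"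
proof (rule sym, rule ray_to_end_unique)
  show "ray E (\<lambda>n. ray_to_end x (n + k))" by (rule ray_shift[OF ray_to_end(1)])
  show "ray_to_end x (0 + k) = ray_to_end x k" by simp
  show "same_end (\<lambda>n. ray_to_end x (n + k)) ws" by (rule same_end_trans[OF same_end_shift ray_to_end(3)])
qed

lemma ray_to_end_eq_funpow: "ray_to_end x n = (parent ^^ n) x"
proof (induction n)
  case 0 then show ?case by (simp add: ray_to_end(2))
next
  case (Suc n)
  have "ray_to_end x (Suc n) = ray_to_end (ray_to_end x n) 1" by (simp add: ray_to_end_shift)
  also have "\<dots> = parent (ray_to_end x n)" by (simp add: parent_def)
  finally show ?case using Suc by simp
qed

lemma vle_iff_funpow_parent: "vle E ws x y \<longleftrightarrow> (\<exists>n. (parent ^^ n) x = y)"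
proof
  assume "vle E ws x y"
  then obtain r where "ray E r" "r 0 = x" "same_end r ws" "y \<in> range r" unfolding vle_def by blast
  then have "r = ray_to_end x" by (intro ray_to_end_unique)
  then show "\<exists>n. (parent ^^ n) x = y" using \<open>y \<in> range r\<close> ray_to_end_eq_funpow by auto
next
  assume "\<exists>n. (parent ^^ n) x = y"
  then show "vle E ws x y" unfolding vle_def using ray_to_end ray_to_end_eq_funpow by (metis rangeI)
qed

lemma E_parent: "E x (parent x)"
  using ray_to_end(1)[of x] ray_to_end(2)[of x] unfolding ray_def parent_def by (metis One_nat_def)

lemma funpow_parent_inj: "(parent ^^ n) x = (parent ^^ m) x \<Longrightarrow> n = m"
  using ray_to_end(1)[of x] unfolding ray_def ray_to_end_eq_funpow[symmetric] by (simp add: inj_eq)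

lemma vle_refl: "vle E ws x x"
  unfolding vle_iff_funpow_parent by (rule exI[of _ 0]) simp

lemma vle_trans: "vle E ws x y \<Longrightarrow> vle E ws y z \<Longrightarrow> vle E ws x z"
  unfolding vle_iff_funpow_parent by (metis funpow_add o_apply)

lemma vle_antisym: "vle E ws x y \<Longrightarrow> vle E ws y x \<Longrightarrow> x = y"
proof -
  assume "vle E ws x y" "vle E ws y x"
  then obtain n m where "(parent ^^ n) x = y" "(parent ^^ m) y = x" unfolding vle_iff_funpow_parent by blast
  then have "(parent ^^ (m + n)) x = (parent ^^ 0) x" by (simp add: funpow_add)
  then have "m + n = 0" by (rule funpow_parent_inj)
  then show "x = y" using \<open>(parent ^^ n) x = y\<close> by simp
qed

lemma vle_comparable_above: "vle E ws z x \<Longrightarrow> vle E ws z y \<Longrightarrow> vle E ws x y \<or> vle E ws y x"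
proof -
  assume "vle E ws z x" "vle E ws z y"
  then obtain a b where a: "(parent ^^ a) z = x" and b: "(parent ^^ b) z = y" unfolding vle_iff_funpow_parent by blast
  show ?thesis
  proof (cases "a \<le> b")
    case True
    then have "(parent ^^ (b - a)) x = y" using a b by (metis funpow_add le_add_diff_inverse2 o_apply)
    then show ?thesis unfolding vle_iff_funpow_parent by blast
  next
    case False
    then have "(parent ^^ (a - b)) y = x" using a b by (metis funpow_add le_add_diff_inverse2 nat_le_linear o_apply)
    then show ?thesis unfolding vle_iff_funpow_parent by blast
  qed
qed

lemma geodesic_ray_to_end:
  assumes adj: "\<forall>n. E (g n) (g (n + 1))" and ig: "inj g" and se: "same_end (\<lambda>n. g (int n)) ws"
  shows "ray_to_end (g i) = (\<lambda>n. g (i + int n))"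
proof (rule sym, rule ray_to_end_unique)
  have "inj (\<lambda>n::nat. g (i + int n))" using ig unfolding inj_def by (metis add_left_cancel of_nat_eq_iff)
  moreover have "E (g (i + int n)) (g (i + int (Suc n)))" for n
    using adj[rule_format, of "i + int n"] by (simp add: ac_simps)
  ultimately show "ray E (\<lambda>n. g (i + int n))" by (simp add: ray_def)
  show "g (i + int 0) = g i" by simp
  have "same_end (\<lambda>n. g (i + int n)) (\<lambda>n. g (int n))"
  proof (cases "0 \<le> i")
    case True
    then have "\<forall>n. g (i + int (n + 0)) = g (int (n + nat i))" by (simp add: add.commute)
    then show ?thesis unfolding same_end_def by blast
  next
    case False
    then have "\<forall>n. g (i + int (n + nat (- i))) = g (int (n + 0))" by simp
    then show ?thesis unfolding same_end_def by blast
  qed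
  then show "same_end (\<lambda>n. g (i + int n)) ws" using se by (rule same_end_trans)
qed

lemma funpow_parent_geodesic:
  assumes "\<forall>n. E (g n) (g (n + 1))" "inj g" "same_end (\<lambda>n. g (int n)) ws"
  shows "(parent ^^ n) (g i) = g (i + int n)"
  using geodesic_ray_to_end[OF assms, of i] ray_to_end_eq_funpow[of "g i" n] by simp

lemma ble_mono: "ble E ws \<omega> y \<Longrightarrow> vle E ws y x \<Longrightarrow> ble E ws \<omega> x"
proof -
  assume "ble E ws \<omega> y" "vle E ws y x"
  then obtain g where g: "\<forall>n. E (g n) (g (n + 1))" "inj g" "same_end (\<lambda>n. g (- int n)) \<omega>"
    "same_end (\<lambda>n. g (int n)) ws" "y \<in> range g" unfolding ble_def by blast
  obtain i where i: "y = g i" using g(5) by blast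
  obtain n where "(parent ^^ n) y = x" using \<open>vle E ws y x\<close> unfolding vle_iff_funpow_parent by blast
  then have "x = g (i + int n)" using funpow_parent_geodesic[OF g(1,2,4)] i by simp
  then show ?thesis unfolding ble_def using g by blast
qed

lemma geodesic_vle:
  assumes "\<forall>n. E (g n) (g (n + 1))" "inj g" "same_end (\<lambda>n. g (int n)) ws" "i \<le> j"
  shows "vle E ws (g i) (g j)"
proof -
  have "(parent ^^ nat (j - i)) (g i) = g (i + int (nat (j - i)))" by (rule funpow_parent_geodesic[OF assms(1-3)])
  also have "\<dots> = g j" using assms(4) by simp
  finally show ?thesis unfolding vle_iff_funpow_parent by blast
qed

lemma ble_eventually_vle:
  assumes "ble E ws \<omega> x"
  shows "\<exists>M. \<forall>N\<ge>M. vle E ws (\<omega> N) x"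
proof -
  obtain g where g: "\<forall>n. E (g n) (g (n + 1))" "inj g" "same_end (\<lambda>n. g (- int n)) \<omega>"
    "same_end (\<lambda>n. g (int n)) ws" "x \<in> range g" using assms unfolding ble_def by blast
  obtain i where i: "x = g i" using g(5) by blast
  obtain k m where km: "\<And>n. g (- int (n + k)) = \<omega> (n + m)" using g(3) unfolding same_end_def by blast
  have "vle E ws (\<omega> N) x" if N: "N \<ge> m + nat \<bar>i\<bar>" for N
  proof -
    have "\<omega> N = g (- int ((N - m) + k))" using km[of "N - m"] N by simp
    moreover have "- int ((N - m) + k) \<le> i" using N by linarith
    ultimately show ?thesis using geodesic_vle[OF g(1,2,4)] i by simp
  qed
  then show ?thesis by blast
qed

lemma ble_comparable: "ble E ws \<omega> x \<Longrightarrow> ble E ws \<omega> y \<Longrightarrow> vle E ws x y \<or> vle E ws y x"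
proof -
  assume "ble E ws \<omega> x" "ble E ws \<omega> y"
  then obtain M1 M2 where "\<forall>N\<ge>M1. vle E ws (\<omega> N) x" "\<forall>N\<ge>M2. vle E ws (\<omega> N) y"
    using ble_eventually_vle by meson
  then have "vle E ws (\<omega> (M1 + M2)) x" "vle E ws (\<omega> (M1 + M2)) y" by auto
  then show ?thesis by (rule vle_comparable_above)
qed

lemma ble_descendant: "ble E ws \<omega> x \<Longrightarrow> \<exists>y. (parent ^^ n) y = x \<and> ble E ws \<omega> y"
proof -
  assume "ble E ws \<omega> x"
  then obtain g where g: "\<forall>n. E (g n) (g (n + 1))" "inj g" "same_end (\<lambda>n. g (- int n)) \<omega>"
    "same_end (\<lambda>n. g (int n)) ws" "x \<in> range g" unfolding ble_def by blast
  obtain i where i: "x = g i" using g(5) by blast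
  have "(parent ^^ n) (g (i - int n)) = x" using funpow_parent_geodesic[OF g(1,2,4)] i by simp
  moreover have "ble E ws \<omega> (g (i - int n))" unfolding ble_def using g by blast
  ultimately show ?thesis by blast
qed

lemma level_eqI:
  assumes ab: "\<And>n. ray_to_end x (n + a) = ws (n + b)"
  shows "level E ws x = int b - int a"
proof -
  have d: "tree_dist E x (ws (n + b)) = n + a" for n
  proof -
    have "tree_dist E (hd (map (ray_to_end x) [0..<Suc (n + a)])) (last (map (ray_to_end x) [0..<Suc (n + a)]))
        = length (map (ray_to_end x) [0..<Suc (n + a)]) - 1"
      by (rule tree_dist_path[OF tree ray_prefix_path(1)[OF ray_to_end(1)]])
    then show ?thesis using ray_prefix_path(2,3)[OF ray_to_end(1), of x "n + a"] ray_to_end(2)[of x] ab[of n]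
      by (simp del: upt_Suc)
  qed
  have ev: "\<forall>\<^sub>F j in sequentially. int j - int (tree_dist E x (ws j)) = int b - int a"
    unfolding eventually_sequentially
  proof (intro exI[of _ b] allI impI)
    fix j assume "b \<le> j"
    then have "j = (j - b) + b" by simp
    then have "tree_dist E x (ws j) = (j - b) + a" using d[of "j - b"] by metis
    then show "int j - int (tree_dist E x (ws j)) = int b - int a" using \<open>b \<le> j\<close> by simp
  qed
  show ?thesis unfolding level_def
  proof (rule the_equality)
    show "\<forall>\<^sub>F j in sequentially. int j - int (tree_dist E x (ws j)) = int b - int a" by (rule ev)
  next
    fix k assume "\<forall>\<^sub>F j in sequentially. int j - int (tree_dist E x (ws j)) = k"
    then have "\<forall>\<^sub>F j in sequentially. k = int b - int a" using ev by (rule eventually_elim2) simp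
    then show "k = int b - int a" by simp
  qed
qed

lemma level_parent: "level E ws (parent x) = level E ws x + 1"
proof -
  obtain a b where ab: "\<And>n. ray_to_end x (n + a) = ws (n + b)" using ray_to_end(3)[of x] unfolding same_end_def by blast
  have "ray_to_end (parent x) = (\<lambda>n. ray_to_end x (n + 1))" unfolding parent_def by (rule ray_to_end_shift)
  then have "ray_to_end (parent x) (n + a) = ws (n + (b + 1))" for n using ab[of "n + 1"] by (simp add: ac_simps)
  then have "level E ws (parent x) = int (b + 1) - int a" by (rule level_eqI)
  then show ?thesis using level_eqI[OF ab] by simp
qed

lemma level_funpow_parent: "level E ws ((parent ^^ n) x) = level E ws x + int n"
  by (induction n) (simp_all add: level_parent)

lemma vle_level_le: "vle E ws y x \<Longrightarrow> level E ws y \<le> level E ws x"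
  unfolding vle_iff_funpow_parent using level_funpow_parent by force

lemma vle_level_eq_imp_eq: "vle E ws y x \<Longrightarrow> level E ws y = level E ws x \<Longrightarrow> y = x"
  unfolding vle_iff_funpow_parent using level_funpow_parent by force

lemma sectorB_mono: "vle E ws y x \<Longrightarrow> sectorB E base ws y \<subseteq> sectorB E base ws x"
  unfolding sectorB_def using ble_mono by blast

lemma sectorB_disjoint: "\<not> vle E ws x y \<Longrightarrow> \<not> vle E ws y x \<Longrightarrow> sectorB E base ws x \<inter> sectorB E base ws y = {}"
  unfolding sectorB_def using ble_comparable by blast

lemma sectorB_disjoint_same_level: "level E ws x = level E ws y \<Longrightarrow> x \<noteq> y \<Longrightarrow> sectorB E base ws x \<inter> sectorB E base ws y = {}"
  by (metis sectorB_disjoint vle_level_eq_imp_eq)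

definition descendants :: "int \<Rightarrow> 'v \<Rightarrow> 'v set" where
  "descendants k x = {y. level E ws y = k \<and> vle E ws y x}"

lemma descendants_subset_children:
  assumes "k < level E ws x"
  shows "descendants k x \<subseteq> (\<Union>c\<in>{c. parent c = x}. descendants k c)"
proof
  fix y assume "y \<in> descendants k x"
  then have y: "level E ws y = k" "vle E ws y x" unfolding descendants_def by auto
  then obtain j where j: "(parent ^^ j) y = x" unfolding vle_iff_funpow_parent by blast
  with y assms obtain j' where j': "j = Suc j'" by (cases j) auto
  have "parent ((parent ^^ j') y) = x" using j j' by simp
  moreover have "vle E ws y ((parent ^^ j') y)" unfolding vle_iff_funpow_parent by blast
  ultimately show "y \<in> (\<Union>c\<in>{c. parent c = x}. descendants k c)" using y unfolding descendants_def by blast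
qed

lemma finite_children: "locally_finite E \<Longrightarrow> finite {c. parent c = x}"
  using E_parent tree unfolding is_tree_def locally_finite_def by (metis (mono_tags) finite_subset mem_Collect_eq subsetI)

lemma finite_descendants:
  assumes lf: "locally_finite E"
  shows "k \<le> level E ws x \<Longrightarrow> finite (descendants k x)"
proof (induction "nat (level E ws x - k)" arbitrary: x)
  case 0
  then have "descendants k x \<subseteq> {x}" unfolding descendants_def using vle_level_eq_imp_eq vle_level_le by force
  then show ?case by (rule finite_subset) simp
next
  case (Suc n)
  have "finite (descendants k c)" if "parent c = x" for c
    using Suc level_parent[of c] that by simp
  then have "finite (\<Union>c\<in>{c. parent c = x}. descendants k c)" using finite_children[OF lf] by blast
  moreover have "k < level E ws x" using Suc(2) by linarith
  ultimately show ?case using descendants_subset_children finite_subset by blast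
qed

lemma sectorB_UN_descendants:
  assumes "k \<le> level E ws x"
  shows "sectorB E base ws x = (\<Union>y\<in>descendants k x. sectorB E base ws y)"
proof
  show "(\<Union>y\<in>descendants k x. sectorB E base ws y) \<subseteq> sectorB E base ws x"
    unfolding descendants_def using sectorB_mono by blast
  show "sectorB E base ws x \<subseteq> (\<Union>y\<in>descendants k x. sectorB E base ws y)"
  proof
    fix \<omega> assume "\<omega> \<in> sectorB E base ws x"
    then have w: "\<omega> \<in> bdry E base ws" "ble E ws \<omega> x" unfolding sectorB_def by auto
    obtain y where y: "(parent ^^ nat (level E ws x - k)) y = x" "ble E ws \<omega> y"
      using ble_descendant[OF w(2)] by blast
    have "level E ws y = k" using level_funpow_parent[of "nat (level E ws x - k)" y] y(1) assms by simp
    moreover have "vle E ws y x" using y(1) unfolding vle_iff_funpow_parent by blast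
    ultimately show "\<omega> \<in> (\<Union>y\<in>descendants k x. sectorB E base ws y)"
      using w y unfolding descendants_def sectorB_def by blast
  qed
qed

lemma disjoint_family_on_descendants: "disjoint_family_on (sectorB E base ws) (descendants k x)"
  unfolding disjoint_family_on_def descendants_def using sectorB_disjoint_same_level by auto

lemma descendants_disjoint: "\<not> vle E ws x y \<Longrightarrow> \<not> vle E ws y x \<Longrightarrow> descendants k x \<inter> descendants k y = {}"
  unfolding descendants_def using vle_comparable_above by blast

end

section \<open>Carleson estimates for a partially ordered family of sets\<close>

lemma ennreal_top_if_multiples_bounded:
  fixes r B :: ennreal
  assumes r: "0 < r" and le: "\<And>n. of_nat n * r \<le> B"
  shows "B = \<infinity>"
proof (rule ccontr)
  assume "B \<noteq> \<infinity>"
  then obtain b where b: "B = ennreal b" "0 \<le> b" by (cases B) auto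
  show False
  proof (cases "r = \<infinity>")
    case True
    then show False using le[of 1] b by (simp add: top_unique)
  next
    case False
    then obtain r' where r': "r = ennreal r'" "0 < r'" using r by (cases r) auto
    obtain n where n: "b < real n * r'" using reals_Archimedean3[OF r'(2)] by blast
    have "ennreal (real n * r') \<le> ennreal b"
      using le[of n] r' b by (simp add: ennreal_mult' ennreal_of_nat_eq_real_of_nat)
    then show False using n b by (simp add: ennreal_le_iff)
  qed
qed

text \<open>On an uncountable set the monotone convergence theorem is not available; instead a simple
  function below \<open>f\<close> either has finite support or takes some positive value infinitely often.\<close>

lemma nn_integral_count_space_le_if_finite_sums_le:
  fixes f :: "'a \<Rightarrow> ennreal"
  assumes fs: "\<And>F. finite F \<Longrightarrow> F \<subseteq> A \<Longrightarrow> sum f F \<le> B"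
  shows "(\<integral>\<^sup>+x. f x \<partial>count_space A) \<le> B"
  unfolding nn_integral_def
proof (rule SUP_least)
  fix g assume "g \<in> {g. simple_function (count_space A) g \<and> g \<le> f}"
  then have sg: "simple_function (count_space A) g" and gf: "g \<le> f" by auto
  have fin: "finite (g ` A)" using sg by simp
  show "integral\<^sup>S (count_space A) g \<le> B"
  proof (cases "finite {a\<in>A. 0 < g a}")
    case True
    have "integral\<^sup>S (count_space A) g = (\<Sum>a|a\<in>A \<and> 0 < g a. g a)"
      using nn_integral_eq_simple_integral[OF sg] nn_integral_count_space[OF True] by simp
    also have "\<dots> \<le> (\<Sum>a|a\<in>A \<and> 0 < g a. f a)" using gf by (intro sum_mono) (auto simp: le_fun_def)
    also have "\<dots> \<le> B" using True by (intro fs) auto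
    finally show ?thesis .
  next
    case False
    have "{a\<in>A. 0 < g a} = (\<Union>r\<in>{r\<in>g ` A. 0 < r}. {a\<in>A. g a = r})" by auto
    then obtain r where r: "0 < r" "infinite {a\<in>A. g a = r}"
      using False fin by (metis (no_types, lifting) finite_UN mem_Collect_eq finite_subset subsetI)
    have "of_nat n * r \<le> B" for n
    proof -
      obtain F where F: "finite F" "card F = n" "F \<subseteq> {a\<in>A. g a = r}"
        using infinite_arbitrarily_large[OF r(2)] by blast
      have "of_nat n * r = (\<Sum>a\<in>F. g a)" using F(2,3) by (simp add: sum.cong[of F F g "\<lambda>_. r"] subset_eq)
      also have "\<dots> \<le> (\<Sum>a\<in>F. f a)" using gf by (intro sum_mono) (auto simp: le_fun_def)
      also have "\<dots> \<le> B" using F by (intro fs) auto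
      finally show ?thesis .
    qed
    then have "B = \<infinity>" by (rule ennreal_top_if_multiples_bounded[OF r(1)])
    then show ?thesis by simp
  qed
qed

lemma nn_integral_count_space_mono_set:
  fixes f :: "'a \<Rightarrow> ennreal"
  assumes "A \<subseteq> B"
  shows "(\<integral>\<^sup>+x. f x \<partial>count_space A) \<le> (\<integral>\<^sup>+x. f x \<partial>count_space B)"
proof -
  have "(\<integral>\<^sup>+x. f x \<partial>count_space A) = (\<integral>\<^sup>+x. f x * indicator A x \<partial>count_space UNIV)"
    by (rule nn_integral_count_space_indicator) (simp add: NO_MATCH_def)
  also have "\<dots> \<le> (\<integral>\<^sup>+x. f x * indicator B x \<partial>count_space UNIV)"
    using assms by (intro nn_integral_mono) (auto split: split_indicator)
  also have "\<dots> = (\<integral>\<^sup>+x. f x \<partial>count_space B)"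
    by (rule nn_integral_count_space_indicator[symmetric]) (simp add: NO_MATCH_def)
  finally show ?thesis .
qed

lemma nn_integral_count_space_indicator_subset:
  fixes f :: "'a \<Rightarrow> ennreal"
  assumes "S \<subseteq> V"
  shows "(\<integral>\<^sup>+x. f x * indicator S x \<partial>count_space V) = (\<integral>\<^sup>+x. f x \<partial>count_space S)"
proof -
  have "(\<integral>\<^sup>+x. f x * indicator S x \<partial>count_space V)
      = (\<integral>\<^sup>+x. f x * indicator S x * indicator V x \<partial>count_space UNIV)"
    by (rule nn_integral_count_space_indicator) (simp add: NO_MATCH_def)
  also have "\<dots> = (\<integral>\<^sup>+x. f x * indicator S x \<partial>count_space UNIV)"
    using assms by (intro nn_integral_cong) (auto split: split_indicator)
  also have "\<dots> = (\<integral>\<^sup>+x. f x \<partial>count_space S)"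
    by (rule nn_integral_count_space_indicator[symmetric]) (simp add: NO_MATCH_def)
  finally show ?thesis .
qed

lemma measT_mono: "A \<subseteq> B \<Longrightarrow> measT \<sigma> A \<le> measT \<sigma> B"
  unfolding measT_def by (rule nn_integral_count_space_mono_set)

lemma sum_nn_integral_disjoint_le:
  assumes "finite I" "disjoint_family_on A I" "\<And>i. i \<in> I \<Longrightarrow> A i \<in> sets M"
    and h[measurable]: "h \<in> borel_measurable M"
  shows "(\<Sum>i\<in>I. \<integral>\<^sup>+x. h x * indicator (A i) x \<partial>M) \<le> (\<integral>\<^sup>+x. h x \<partial>M)"
proof -
  have "(\<Sum>i\<in>I. \<integral>\<^sup>+x. h x * indicator (A i) x \<partial>M) = (\<integral>\<^sup>+x. (\<Sum>i\<in>I. h x * indicator (A i) x) \<partial>M)"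
    using assms(3) by (intro nn_integral_sum[symmetric]) auto
  also have "\<dots> = (\<integral>\<^sup>+x. h x * indicator (\<Union>i\<in>I. A i) x \<partial>M)"
    by (simp add: sum_distrib_left[symmetric] indicator_UN_disjoint[OF assms(1,2)])
  also have "\<dots> \<le> (\<integral>\<^sup>+x. h x \<partial>M)"
    by (intro nn_integral_mono) (simp add: indicator_def)
  finally show ?thesis .
qed

text \<open>The part of \<open>\<integral>\<^sub>A |F|\<close> where \<open>|F| \<le> t\<close> is at most \<open>t \<mu>(A)\<close>; subtracting it (finite
  because \<open>\<mu>(A) < \<infinity>\<close>) halves the lower bound.\<close>

lemma nn_integral_above_level_ge:
  fixes F :: "'a \<Rightarrow> real"
  assumes F[measurable]: "F \<in> borel_measurable M" and A[measurable]: "A \<in> sets M"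
    and fin: "emeasure M A < \<infinity>" and t: "0 < t"
    and big: "ennreal (2 * t) * emeasure M A \<le> (\<integral>\<^sup>+\<omega>. ennreal \<bar>F \<omega>\<bar> * indicator A \<omega> \<partial>M)"
  shows "ennreal t * emeasure M A
    \<le> (\<integral>\<^sup>+\<omega>. ennreal \<bar>F \<omega>\<bar> * indicator {\<omega>. t < \<bar>F \<omega>\<bar>} \<omega> * indicator A \<omega> \<partial>M)"
    (is "_ \<le> ?X")
proof -
  define Y where "Y = (\<integral>\<^sup>+\<omega>. ennreal \<bar>F \<omega>\<bar> * indicator {\<omega>. \<bar>F \<omega>\<bar> \<le> t} \<omega> * indicator A \<omega> \<partial>M)"
  have "(\<integral>\<^sup>+\<omega>. ennreal \<bar>F \<omega>\<bar> * indicator A \<omega> \<partial>M) = ?X + Y"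
    unfolding Y_def by (subst nn_integral_add[symmetric]) (auto intro!: nn_integral_cong split: split_indicator)
  also have "Y \<le> (\<integral>\<^sup>+\<omega>. ennreal t * indicator A \<omega> \<partial>M)"
    unfolding Y_def by (intro nn_integral_mono) (simp add: indicator_def ennreal_leI)
  also have "\<dots> = ennreal t * emeasure M A" by (simp add: nn_integral_cmult_indicator)
  finally have upper: "(\<integral>\<^sup>+\<omega>. ennreal \<bar>F \<omega>\<bar> * indicator A \<omega> \<partial>M) \<le> ?X + ennreal t * emeasure M A"
    by (simp add: add_left_mono)
  have "ennreal t * emeasure M A + ennreal t * emeasure M A = ennreal (2 * t) * emeasure M A"
    using t ennreal_plus[of t t] by (simp only: mult_2 distrib_right[symmetric])
  also have "\<dots> \<le> ennreal t * emeasure M A + ?X" using big upper by (simp add: add.commute)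
  finally have "ennreal t * emeasure M A + ennreal t * emeasure M A \<le> ennreal t * emeasure M A + ?X" .
  moreover have "ennreal t * emeasure M A \<noteq> \<infinity>" using fin by (simp add: ennreal_mult_less_top less_top)
  ultimately show ?thesis using ennreal_add_left_cancel_le by blast
qed

lemma finite_has_maximal_rel:
  fixes le :: "'v \<Rightarrow> 'v \<Rightarrow> bool"
  assumes tr: "\<And>x y z. le x y \<Longrightarrow> le y z \<Longrightarrow> le x z"
    and an: "\<And>x y. le x y \<Longrightarrow> le y x \<Longrightarrow> x = y"
    and rf: "\<And>x. le x x"
    and F: "finite F" "y \<in> F"
  shows "\<exists>x\<in>F. le y x \<and> (\<forall>z\<in>F. le x z \<longrightarrow> z = x)"
proof -
  define h where "h x = card {z\<in>F. le x z}" for x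
  obtain x where x1: "x \<in> F \<and> le y x" and x2: "\<And>x'. x' \<in> F \<and> le y x' \<Longrightarrow> h x \<le> h x'"
    using ex_has_least_nat[of "\<lambda>x. x \<in> F \<and> le y x" y h] F(2) rf by auto
  have "z = x" if z: "z \<in> F" "le x z" for z
  proof (rule ccontr)
    assume "z \<noteq> x"
    then have "x \<notin> {w\<in>F. le z w}" using an z(2) by blast
    then have "{w\<in>F. le z w} \<subset> {w\<in>F. le x w}" using x1 rf tr[OF z(2)] by blast
    then have "h z < h x" unfolding h_def using F(1) by (intro psubset_card_mono) auto
    moreover have "h x \<le> h z" using x2[of z] z tr x1 by blast
    ultimately show False by simp
  qed
  then show ?thesis using x1 by blast
qed

locale carleson_family =
  fixes le :: "'v \<Rightarrow> 'v \<Rightarrow> bool" and M :: "'b measure" and A :: "'v \<Rightarrow> 'b set"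
    and \<sigma> :: "'v \<Rightarrow> real" and Vs :: "'v set" and C :: real
  assumes rel_trans: "\<And>x y z. le x y \<Longrightarrow> le y z \<Longrightarrow> le x z"
    and rel_antisym: "\<And>x y. le x y \<Longrightarrow> le y x \<Longrightarrow> x = y"
    and rel_refl: "\<And>x. le x x"
    and A_sets: "\<And>x. x \<in> Vs \<Longrightarrow> A x \<in> sets M"
    and disj: "\<And>x y. x \<in> Vs \<Longrightarrow> y \<in> Vs \<Longrightarrow> \<not> le x y \<Longrightarrow> \<not> le y x \<Longrightarrow> A x \<inter> A y = {}"
    and carl: "\<And>x. x \<in> Vs \<Longrightarrow> measT \<sigma> {y\<in>Vs. le y x} \<le> ennreal C * emeasure M (A x)"
begin

definition maximals :: "'v set \<Rightarrow> 'v set" where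
  "maximals F = {x\<in>F. \<forall>z\<in>F. le x z \<longrightarrow> z = x}"

lemma maximals_cover: "finite F \<Longrightarrow> y \<in> F \<Longrightarrow> \<exists>x\<in>maximals F. le y x"
  unfolding maximals_def using finite_has_maximal_rel[of le F y] rel_trans rel_antisym rel_refl by blast

lemma disjoint_family_on_maximals: "F \<subseteq> Vs \<Longrightarrow> disjoint_family_on A (maximals F)"
  unfolding disjoint_family_on_def maximals_def using disj by blast

lemma sum_le_sum_maximals:
  assumes F: "finite F" "F \<subseteq> Vs"
  shows "(\<Sum>y\<in>F. ennreal (\<sigma> y)) \<le> (\<Sum>x\<in>maximals F. measT \<sigma> {y\<in>Vs. le y x})"
proof -
  have fin: "finite (maximals F)" using F(1) unfolding maximals_def by simp
  have "(\<Sum>y\<in>F. ennreal (\<sigma> y)) \<le> (\<Sum>y\<in>F. \<Sum>x\<in>{x\<in>maximals F. le y x}. ennreal (\<sigma> y))"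
  proof (rule sum_mono)
    fix y assume "y \<in> F"
    then obtain x where "x \<in> maximals F" "le y x" using maximals_cover[OF F(1)] by blast
    then show "ennreal (\<sigma> y) \<le> (\<Sum>x\<in>{x\<in>maximals F. le y x}. ennreal (\<sigma> y))"
      using fin by (intro member_le_sum) auto
  qed
  also have "\<dots> = (\<Sum>x\<in>maximals F. \<Sum>y\<in>{y\<in>F. le y x}. ennreal (\<sigma> y))"
    by (rule sum.swap_restrict[OF F(1) fin])
  also have "\<dots> \<le> (\<Sum>x\<in>maximals F. measT \<sigma> {y\<in>Vs. le y x})"
  proof (rule sum_mono)
    fix x
    have "(\<Sum>y\<in>{y\<in>F. le y x}. ennreal (\<sigma> y)) = measT \<sigma> {y\<in>F. le y x}"
      unfolding measT_def using F(1) by (simp add: nn_integral_count_space_finite)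
    also have "\<dots> \<le> measT \<sigma> {y\<in>Vs. le y x}" using F(2) by (intro measT_mono) auto
    finally show "(\<Sum>y\<in>{y\<in>F. le y x}. ennreal (\<sigma> y)) \<le> measT \<sigma> {y\<in>Vs. le y x}" .
  qed
  finally show ?thesis .
qed

text \<open>If every point of \<open>S\<close> sees the average \<open>\<lambda>\<close> of \<open>h\<close> on its set, then \<open>\<lambda> \<sigma>(S) \<le> C \<integral> h\<close>:
  on a finite part of \<open>S\<close> it suffices to sum over the maximal elements, whose sets are
  pairwise disjoint.\<close>

lemma maximal_estimate:
  assumes S: "S \<subseteq> Vs" and h[measurable]: "h \<in> borel_measurable M"
    and avg: "\<And>x. x \<in> S \<Longrightarrow> ennreal lam * emeasure M (A x) \<le> (\<integral>\<^sup>+\<omega>. h \<omega> * indicator (A x) \<omega> \<partial>M)"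
  shows "ennreal lam * measT \<sigma> S \<le> ennreal C * (\<integral>\<^sup>+\<omega>. h \<omega> \<partial>M)"
proof -
  have "ennreal lam * measT \<sigma> S = (\<integral>\<^sup>+x. ennreal lam * ennreal (\<sigma> x) \<partial>count_space S)"
    unfolding measT_def by (rule nn_integral_cmult[symmetric]) simp
  also have "\<dots> \<le> ennreal C * (\<integral>\<^sup>+\<omega>. h \<omega> \<partial>M)"
  proof (rule nn_integral_count_space_le_if_finite_sums_le)
    fix F assume F: "finite F" "F \<subseteq> S"
    then have FV: "F \<subseteq> Vs" using S by blast
    have MV: "x \<in> Vs" "x \<in> S" if "x \<in> maximals F" for x
      using that F(2) S unfolding maximals_def by auto
    have "(\<Sum>y\<in>F. ennreal lam * ennreal (\<sigma> y)) = ennreal lam * (\<Sum>y\<in>F. ennreal (\<sigma> y))"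
      by (simp add: sum_distrib_left)
    also have "\<dots> \<le> (\<Sum>x\<in>maximals F. ennreal lam * measT \<sigma> {y\<in>Vs. le y x})"
      using mult_left_mono[OF sum_le_sum_maximals[OF F(1) FV]] by (simp add: sum_distrib_left)
    also have "\<dots> \<le> (\<Sum>x\<in>maximals F. ennreal C * (\<integral>\<^sup>+\<omega>. h \<omega> * indicator (A x) \<omega> \<partial>M))"
    proof (rule sum_mono)
      fix x assume "x \<in> maximals F"
      then have "ennreal lam * measT \<sigma> {y\<in>Vs. le y x} \<le> ennreal lam * (ennreal C * emeasure M (A x))"
        and "ennreal C * (ennreal lam * emeasure M (A x)) \<le> ennreal C * (\<integral>\<^sup>+\<omega>. h \<omega> * indicator (A x) \<omega> \<partial>M)"
        using carl avg MV by (auto intro: mult_left_mono)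
      then show "ennreal lam * measT \<sigma> {y\<in>Vs. le y x} \<le> ennreal C * (\<integral>\<^sup>+\<omega>. h \<omega> * indicator (A x) \<omega> \<partial>M)"
        by (simp add: ac_simps)
    qed
    also have "\<dots> \<le> ennreal C * (\<integral>\<^sup>+\<omega>. h \<omega> \<partial>M)"
      using sum_nn_integral_disjoint_le[OF _ disjoint_family_on_maximals[OF FV]] F(1) A_sets MV
      by (simp add: sum_distrib_left[symmetric] mult_left_mono maximals_def)
    finally show "(\<Sum>y\<in>F. ennreal lam * ennreal (\<sigma> y)) \<le> ennreal C * (\<integral>\<^sup>+\<omega>. h \<omega> \<partial>M)" .
  qed
  finally show ?thesis .
qed

end

lemma powr_le_dyadic_sum:
  fixes a p :: real
  assumes a: "0 \<le> a" and p: "0 < p"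
  shows "ennreal (a powr p) \<le> ennreal (2 powr p) *
    (\<integral>\<^sup>+j. ennreal (2 powr (real_of_int j * p)) * indicator {j. 2 powr real_of_int j < a} j \<partial>count_space UNIV)"
proof (cases "a = 0")
  case True then show ?thesis by simp
next
  case False
  then have a0: "0 < a" using a by simp
  define K where "K = \<lceil>log 2 a\<rceil> - 1"
  have "2 powr real_of_int K < 2 powr (log 2 a)" unfolding K_def by (intro powr_less_mono) linarith+
  then have aK: "2 powr real_of_int K < a" using a0 by simp
  have "2 powr (log 2 a) \<le> 2 powr (real_of_int K + 1)" unfolding K_def by (intro powr_mono) linarith+
  then have "a powr p \<le> (2 powr (real_of_int K + 1)) powr p" using a0 p by (intro powr_mono2) auto
  also have "\<dots> = 2 powr p * 2 powr (real_of_int K * p)"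
    by (simp add: powr_powr powr_add[symmetric] algebra_simps)
  finally have "ennreal (a powr p) \<le> ennreal (2 powr p) * ennreal (2 powr (real_of_int K * p))"
    by (simp add: ennreal_mult'[symmetric] ennreal_leI)
  also have "ennreal (2 powr (real_of_int K * p)) \<le>
      (\<integral>\<^sup>+j. ennreal (2 powr (real_of_int j * p)) * indicator {j. 2 powr real_of_int j < a} j \<partial>count_space UNIV)"
    using nn_integral_ge_point[of K UNIV "\<lambda>j. ennreal (2 powr (real_of_int j * p)) * indicator {j. 2 powr real_of_int j < a} j"] aK
    by simp
  finally show ?thesis by (simp add: mult_left_mono)
qed

definition dyadic_const :: "real \<Rightarrow> real" where
  "dyadic_const p = 2 powr (p - 1) / (1 - 2 powr (1 - p))"

lemma dyadic_const_pos: "1 < p \<Longrightarrow> 0 < dyadic_const p"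
  unfolding dyadic_const_def by (simp add: powr_less_one)

lemma nn_integral_powr_atMost:
  fixes J :: int and q :: real
  assumes q: "0 < q"
  shows "(\<integral>\<^sup>+j. ennreal (2 powr (real_of_int j * q)) \<partial>count_space {..J})
    = ennreal (2 powr (real_of_int J * q) / (1 - 2 powr (- q)))"
proof -
  define r :: real where "r = 2 powr (- q)"
  have r: "0 < r" "r < 1" using q unfolding r_def by (simp_all add: powr_less_one)
  have geom: "2 powr ((real_of_int J - real n) * q) = 2 powr (real_of_int J * q) * r ^ n" for n
    unfolding r_def by (simp add: powr_realpow[symmetric] powr_powr powr_add[symmetric] algebra_simps)
  have "bij_betw (\<lambda>n. J - int n) UNIV {..J}"
    by (rule bij_betwI[where g="\<lambda>j. nat (J - j)"]) auto
  then have "(\<integral>\<^sup>+j. ennreal (2 powr (real_of_int j * q)) \<partial>count_space {..J})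
      = (\<Sum>n. ennreal (2 powr (real_of_int J * q) * r ^ n))"
    by (simp add: nn_integral_bij_count_space[symmetric] nn_integral_count_space_nat geom)
  also have "\<dots> = ennreal (2 powr (real_of_int J * q) / (1 - r))"
  proof -
    have "(\<lambda>n. 2 powr (real_of_int J * q) * r ^ n) sums (2 powr (real_of_int J * q) * (1 / (1 - r)))"
      using r by (intro sums_mult geometric_sums) simp
    then show ?thesis using r by (subst sums_unique[symmetric]) (auto simp: sums_ennreal)
  qed
  finally show ?thesis unfolding r_def .
qed

lemma dyadic_tail_sum_le:
  fixes b p :: real
  assumes b: "0 \<le> b" and p: "1 < p"
  shows "(\<integral>\<^sup>+j. ennreal (2 powr (real_of_int j * (p - 1))) * indicator {j. 2 powr (real_of_int j - 1) < b} j
      \<partial>count_space UNIV) \<le> ennreal (dyadic_const p) * ennreal (b powr (p - 1))"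
proof (cases "b = 0")
  case True then show ?thesis by (simp add: indicator_def)
next
  case False
  then have b0: "0 < b" using b by simp
  define J where "J = \<lceil>log 2 b\<rceil>"
  have jJ: "j \<le> J" if "2 powr (real_of_int j - 1) < b" for j
  proof (rule ccontr)
    assume "\<not> j \<le> J"
    then have "2 powr (log 2 b) \<le> 2 powr (real_of_int j - 1)" unfolding J_def by (intro powr_mono) linarith+
    then show False using that b0 by simp
  qed
  have "2 powr real_of_int J < 2 powr (log 2 b + 1)" unfolding J_def by (intro powr_less_mono) linarith+
  then have JB: "2 powr real_of_int J < 2 * b" using b0 by (simp add: powr_add)
  have "(\<integral>\<^sup>+j. ennreal (2 powr (real_of_int j * (p - 1))) * indicator {j. 2 powr (real_of_int j - 1) < b} j
      \<partial>count_space UNIV) \<le> (\<integral>\<^sup>+j. ennreal (2 powr (real_of_int j * (p - 1))) \<partial>count_space {..J})"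
    unfolding nn_integral_count_space_indicator[of "{..J}", simplified NO_MATCH_def, simplified]
    using jJ by (intro nn_integral_mono) (auto split: split_indicator)
  also have "\<dots> = ennreal (2 powr (real_of_int J * (p - 1)) / (1 - 2 powr (1 - p)))"
    using p nn_integral_powr_atMost[of "p - 1" J] by simp
  also have "\<dots> \<le> ennreal (dyadic_const p * b powr (p - 1))"
  proof (rule ennreal_leI)
    have "2 powr (real_of_int J * (p - 1)) = (2 powr real_of_int J) powr (p - 1)" by (simp add: powr_powr)
    also have "\<dots> \<le> (2 * b) powr (p - 1)" using JB p by (intro powr_mono2) auto
    also have "\<dots> = 2 powr (p - 1) * b powr (p - 1)" using b0 by (simp add: powr_mult)
    finally have "2 powr (real_of_int J * (p - 1)) \<le> 2 powr (p - 1) * b powr (p - 1)" .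
    moreover have "2 powr (1 - p) < 1" using p by (simp add: powr_less_one)
    ultimately show "2 powr (real_of_int J * (p - 1)) / (1 - 2 powr (1 - p)) \<le> dyadic_const p * b powr (p - 1)"
      unfolding dyadic_const_def by (simp add: divide_right_mono)
  qed
  also have "\<dots> = ennreal (dyadic_const p) * ennreal (b powr (p - 1))"
    using dyadic_const_pos[OF p] by (simp add: ennreal_mult)
  finally show ?thesis .
qed

lemma dyadic_tail_sum_mult_le:
  fixes b p :: real
  assumes b: "0 \<le> b" and p: "1 < p"
  shows "(\<integral>\<^sup>+j. ennreal (2 powr (real_of_int j * (p - 1)))
      * (if 2 powr (real_of_int j - 1) < b then ennreal b else 0) \<partial>count_space UNIV)
    \<le> ennreal (dyadic_const p) * ennreal (b powr p)"
proof -
  have "b * b powr (p - 1) = b powr p"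
    using b p by (cases "b = 0") (simp_all add: powr_mult_base)
  then have "ennreal b * (ennreal (dyadic_const p) * ennreal (b powr (p - 1)))
      = ennreal (dyadic_const p) * ennreal (b powr p)"
    using b dyadic_const_pos[OF p] by (simp add: ennreal_mult[symmetric] mult.left_commute)
  moreover have "(\<integral>\<^sup>+j. ennreal (2 powr (real_of_int j * (p - 1)))
      * (if 2 powr (real_of_int j - 1) < b then ennreal b else 0) \<partial>count_space UNIV)
    = ennreal b * (\<integral>\<^sup>+j. ennreal (2 powr (real_of_int j * (p - 1)))
      * indicator {j. 2 powr (real_of_int j - 1) < b} j \<partial>count_space UNIV)"
    by (subst nn_integral_cmult[symmetric]) (auto intro!: nn_integral_cong simp: indicator_def mult.commute)
  ultimately show ?thesis
    using mult_left_mono[OF dyadic_tail_sum_le[OF b p], of "ennreal b"] by simp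
qed

lemma ex_powr_bound:
  assumes K: "0 < K" and p: "0 < p" and bound: "\<And>f. Q f \<Longrightarrow> X f \<le> ennreal K * Y f"
  shows "\<exists>C>0. \<forall>f. Q f \<longrightarrow> X f \<le> ennreal (C powr p) * Y f"
proof (intro exI[of _ "K powr (1 / p)"] conjI allI impI)
  show "0 < K powr (1 / p)" using K by simp
  fix f assume "Q f"
  then show "X f \<le> ennreal ((K powr (1 / p)) powr p) * Y f" using K p bound by (simp add: powr_powr)
qed

lemma nn_integral_powr_le_dyadic:
  assumes p: "0 < p"
  shows "(\<integral>\<^sup>+x. ennreal (\<bar>G x\<bar> powr p) * ennreal (\<sigma> x) \<partial>count_space V)
    \<le> ennreal (2 powr p) * (\<integral>\<^sup>+j. ennreal (2 powr (real_of_int j * p))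
         * measT \<sigma> {x\<in>V. 2 powr real_of_int j < \<bar>G x\<bar>} \<partial>count_space UNIV)"
proof -
  define c where "c j = ennreal (2 powr p) * ennreal (2 powr (real_of_int j * p))" for j :: int
  define S where "S j = {x\<in>V. 2 powr real_of_int j < \<bar>G x\<bar>}" for j :: int
  have "ennreal (\<bar>G x\<bar> powr p) * ennreal (\<sigma> x)
      \<le> (\<integral>\<^sup>+j. c j * indicator {j. 2 powr real_of_int j < \<bar>G x\<bar>} j * ennreal (\<sigma> x) \<partial>count_space UNIV)"
    for x
  proof -
    have "ennreal (\<bar>G x\<bar> powr p) * ennreal (\<sigma> x) \<le> ennreal (2 powr p) * (\<integral>\<^sup>+j. ennreal (2 powr (real_of_int j * p))
        * indicator {j. 2 powr real_of_int j < \<bar>G x\<bar>} j \<partial>count_space UNIV) * ennreal (\<sigma> x)"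
      by (rule mult_right_mono[OF powr_le_dyadic_sum[OF abs_ge_zero p]]) simp
    also have "\<dots> = (\<integral>\<^sup>+j. c j * indicator {j. 2 powr real_of_int j < \<bar>G x\<bar>} j * ennreal (\<sigma> x) \<partial>count_space UNIV)"
      by (subst nn_integral_cmult[symmetric], simp, subst nn_integral_multc[symmetric], simp)
        (simp add: c_def ac_simps)
    finally show ?thesis .
  qed
  then have "(\<integral>\<^sup>+x. ennreal (\<bar>G x\<bar> powr p) * ennreal (\<sigma> x) \<partial>count_space V)
      \<le> (\<integral>\<^sup>+x. (\<integral>\<^sup>+j. c j * (ennreal (\<sigma> x) * indicator (S j) x) \<partial>count_space UNIV) \<partial>count_space V)"
    by (intro nn_integral_mono) (simp add: S_def indicator_def ac_simps)
  also have "\<dots> = (\<integral>\<^sup>+j. c j * measT \<sigma> (S j) \<partial>count_space UNIV)"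
    by (subst nn_integral_count_space_nn_integral)
      (simp_all add: measT_def nn_integral_cmult S_def nn_integral_count_space_indicator_subset)
  finally show ?thesis unfolding c_def S_def by (simp add: nn_integral_cmult mult.assoc)
qed

lemma nn_integral_dyadic_tail_le:
  fixes F :: "'a \<Rightarrow> real"
  assumes F[measurable]: "F \<in> borel_measurable M" and p: "1 < p"
  shows "(\<integral>\<^sup>+j. ennreal (2 powr (real_of_int j * (p - 1)))
      * (\<integral>\<^sup>+\<omega>. ennreal \<bar>F \<omega>\<bar> * indicator {\<omega>. 2 powr (real_of_int j - 1) < \<bar>F \<omega>\<bar>} \<omega> \<partial>M) \<partial>count_space UNIV)
    \<le> ennreal (dyadic_const p) * (\<integral>\<^sup>+\<omega>. ennreal (\<bar>F \<omega>\<bar> powr p) \<partial>M)"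
proof -
  define g where "g j \<omega> = ennreal (2 powr (real_of_int j * (p - 1)))
    * (if 2 powr (real_of_int j - 1) < \<bar>F \<omega>\<bar> then ennreal \<bar>F \<omega>\<bar> else 0)" for j :: int and \<omega>
  have pointwise: "(\<integral>\<^sup>+j. g j \<omega> \<partial>count_space UNIV) \<le> ennreal (dyadic_const p) * ennreal (\<bar>F \<omega>\<bar> powr p)" for \<omega>
    unfolding g_def by (rule dyadic_tail_sum_mult_le[OF abs_ge_zero p])
  have "(\<integral>\<^sup>+\<omega>. ennreal \<bar>F \<omega>\<bar> * indicator {\<omega>. 2 powr (real_of_int j - 1) < \<bar>F \<omega>\<bar>} \<omega> \<partial>M)
      = (\<integral>\<^sup>+\<omega>. (if 2 powr (real_of_int j - 1) < \<bar>F \<omega>\<bar> then ennreal \<bar>F \<omega>\<bar> else 0) \<partial>M)" for j :: int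
    by (intro nn_integral_cong) (simp add: indicator_def)
  then have "(\<integral>\<^sup>+j. ennreal (2 powr (real_of_int j * (p - 1)))
      * (\<integral>\<^sup>+\<omega>. ennreal \<bar>F \<omega>\<bar> * indicator {\<omega>. 2 powr (real_of_int j - 1) < \<bar>F \<omega>\<bar>} \<omega> \<partial>M) \<partial>count_space UNIV)
    = (\<integral>\<^sup>+j. \<integral>\<^sup>+\<omega>. g j \<omega> \<partial>M \<partial>count_space UNIV)"
    unfolding g_def by (simp add: nn_integral_cmult)
  also have "\<dots> = (\<integral>\<^sup>+\<omega>. \<integral>\<^sup>+j. g j \<omega> \<partial>count_space UNIV \<partial>M)"
    by (rule nn_integral_count_space_nn_integral[symmetric]) (simp_all add: g_def)
  also have "\<dots> \<le> (\<integral>\<^sup>+\<omega>. ennreal (dyadic_const p) * ennreal (\<bar>F \<omega>\<bar> powr p) \<partial>M)"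
    by (intro nn_integral_mono pointwise)
  also have "\<dots> = ennreal (dyadic_const p) * (\<integral>\<^sup>+\<omega>. ennreal (\<bar>F \<omega>\<bar> powr p) \<partial>M)"
    by (rule nn_integral_cmult) measurable
  finally show ?thesis .
qed

locale carleson_embedding = carleson_family le M A \<sigma> Vs C
  for le :: "'v \<Rightarrow> 'v \<Rightarrow> bool" and M :: "'b measure" and A \<sigma> Vs C +
  fixes G :: "'v \<Rightarrow> real" and F :: "'b \<Rightarrow> real"
  assumes F_meas[measurable]: "F \<in> borel_measurable M"
    and finite_A: "\<And>x. x \<in> Vs \<Longrightarrow> emeasure M (A x) < \<infinity>"
    and G_le_avg: "\<And>x. x \<in> Vs \<Longrightarrow>
      ennreal \<bar>G x\<bar> * emeasure M (A x) \<le> (\<integral>\<^sup>+\<omega>. ennreal \<bar>F \<omega>\<bar> * indicator (A x) \<omega> \<partial>M)"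
begin

lemma weak_type_estimate:
  assumes t: "0 < t"
  shows "ennreal t * measT \<sigma> {x\<in>Vs. t < \<bar>G x\<bar>} \<le> ennreal C * (\<integral>\<^sup>+\<omega>. ennreal \<bar>F \<omega>\<bar> \<partial>M)"
proof (rule maximal_estimate)
  fix x assume x: "x \<in> {x\<in>Vs. t < \<bar>G x\<bar>}"
  then have "ennreal t * emeasure M (A x) \<le> ennreal \<bar>G x\<bar> * emeasure M (A x)"
    using t by (intro mult_right_mono ennreal_leI) auto
  also have "\<dots> \<le> (\<integral>\<^sup>+\<omega>. ennreal \<bar>F \<omega>\<bar> * indicator (A x) \<omega> \<partial>M)" using x G_le_avg by auto
  finally show "ennreal t * emeasure M (A x) \<le> (\<integral>\<^sup>+\<omega>. ennreal \<bar>F \<omega>\<bar> * indicator (A x) \<omega> \<partial>M)" .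
qed auto

lemma level_set_estimate:
  fixes j :: int
  shows "ennreal (2 powr (real_of_int j - 1)) * measT \<sigma> {x\<in>Vs. 2 powr real_of_int j < \<bar>G x\<bar>}
    \<le> ennreal C * (\<integral>\<^sup>+\<omega>. ennreal \<bar>F \<omega>\<bar> * indicator {\<omega>. 2 powr (real_of_int j - 1) < \<bar>F \<omega>\<bar>} \<omega> \<partial>M)"
proof (rule maximal_estimate)
  fix x assume x: "x \<in> {x\<in>Vs. 2 powr real_of_int j < \<bar>G x\<bar>}"
  have "2 * 2 powr (real_of_int j - 1) = 2 powr real_of_int j" by (simp add: powr_diff)
  then have "ennreal (2 * 2 powr (real_of_int j - 1)) * emeasure M (A x) \<le> ennreal \<bar>G x\<bar> * emeasure M (A x)"
    using x by (intro mult_right_mono ennreal_leI) auto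
  also have "\<dots> \<le> (\<integral>\<^sup>+\<omega>. ennreal \<bar>F \<omega>\<bar> * indicator (A x) \<omega> \<partial>M)" using x G_le_avg by auto
  finally show "ennreal (2 powr (real_of_int j - 1)) * emeasure M (A x) \<le> (\<integral>\<^sup>+\<omega>. ennreal \<bar>F \<omega>\<bar>
      * indicator {\<omega>. 2 powr (real_of_int j - 1) < \<bar>F \<omega>\<bar>} \<omega> * indicator (A x) \<omega> \<partial>M)"
    using x A_sets finite_A by (intro nn_integral_above_level_ge) auto
qed (auto split: split_indicator)

text \<open>Layer-cake decomposition on both sides: the level set \<open>{|G| > 2\<^sup>j}\<close> is controlled by the
  part of \<open>F\<close> above \<open>2\<^sup>j\<^sup>-\<^sup>1\<close>, and summing over \<open>j\<close> reassembles \<open>\<integral> |F|\<^sup>p\<close>.\<close>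

lemma strong_type_estimate:
  assumes p: "1 < p" and C: "0 \<le> C"
  shows "(\<integral>\<^sup>+x. ennreal (\<bar>G x\<bar> powr p) * ennreal (\<sigma> x) \<partial>count_space Vs)
     \<le> ennreal (2 powr p * 2 * dyadic_const p * C) * (\<integral>\<^sup>+\<omega>. ennreal (\<bar>F \<omega>\<bar> powr p) \<partial>M)"
proof -
  define h where "h j = (\<integral>\<^sup>+\<omega>. ennreal \<bar>F \<omega>\<bar> * indicator {\<omega>. 2 powr (real_of_int j - 1) < \<bar>F \<omega>\<bar>} \<omega> \<partial>M)"
    for j :: int
  have level: "ennreal (2 powr (real_of_int j * p)) * measT \<sigma> {x\<in>Vs. 2 powr real_of_int j < \<bar>G x\<bar>}
      \<le> ennreal (2 * C) * (ennreal (2 powr (real_of_int j * (p - 1))) * h j)" for j :: int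
  proof -
    have "2 powr (real_of_int j * p) = 2 * 2 powr (real_of_int j * (p - 1)) * 2 powr (real_of_int j - 1)"
      by (simp add: powr_add[symmetric] powr_mult_base algebra_simps)
    then have "ennreal (2 powr (real_of_int j * p))
        = ennreal (2 * 2 powr (real_of_int j * (p - 1))) * ennreal (2 powr (real_of_int j - 1))"
      by (simp add: ennreal_mult)
    then show ?thesis
      using mult_left_mono[OF level_set_estimate[of j], of "ennreal (2 * 2 powr (real_of_int j * (p - 1)))"] C
      by (simp add: h_def ennreal_mult ac_simps)
  qed
  have "(\<integral>\<^sup>+x. ennreal (\<bar>G x\<bar> powr p) * ennreal (\<sigma> x) \<partial>count_space Vs)
      \<le> ennreal (2 powr p) * (\<integral>\<^sup>+j. ennreal (2 * C) * (ennreal (2 powr (real_of_int j * (p - 1))) * h j)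
           \<partial>count_space UNIV)"
    using p by (intro order_trans[OF nn_integral_powr_le_dyadic] mult_left_mono nn_integral_mono level) auto
  also have "\<dots> \<le> ennreal (2 powr p) * (ennreal (2 * C) * (ennreal (dyadic_const p)
      * (\<integral>\<^sup>+\<omega>. ennreal (\<bar>F \<omega>\<bar> powr p) \<partial>M)))"
    using nn_integral_dyadic_tail_le[OF F_meas p] unfolding h_def
    by (simp add: nn_integral_cmult mult_left_mono)
  also have "\<dots> = ennreal (2 powr p * 2 * dyadic_const p * C) * (\<integral>\<^sup>+\<omega>. ennreal (\<bar>F \<omega>\<bar> powr p) \<partial>M)"
    using C dyadic_const_pos[OF p] by (simp add: ennreal_mult ac_simps)
  finally show ?thesis .
qed

end


section \<open>Carleson measures and the Poisson integral\<close>

lemma abs_le_1_plus_abs_powr: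
  fixes a p :: real
  assumes "1 \<le> p"
  shows "\<bar>a\<bar> \<le> 1 + \<bar>a\<bar> powr p"
proof (cases "\<bar>a\<bar> \<le> 1")
  case True then show ?thesis using powr_ge_zero[of "\<bar>a\<bar>" p] by linarith
next
  case False
  then have "\<bar>a\<bar> powr 1 \<le> \<bar>a\<bar> powr p" using assms by (intro powr_mono) auto
  then show ?thesis using False by simp
qed

locale poisson_setting = tree_end E ws for E :: "'v \<Rightarrow> 'v \<Rightarrow> bool" and ws +
  fixes base :: 'v and \<nu> :: "(nat \<Rightarrow> 'v) measure" and \<sigma> :: "'v \<Rightarrow> real"
  assumes lf: "locally_finite E"
    and nu_sets: "sets \<nu> = sigma_sets (bdry E base ws) (range (sectorB E base ws))"
    and nu_pos: "\<And>x. 0 < emeasure \<nu> (sectorB E base ws x)"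
    and nu_fin: "\<And>x. emeasure \<nu> (sectorB E base ws x) < \<infinity>"
    and sigma_nonneg: "\<And>x. 0 \<le> \<sigma> x"
begin

abbreviation B where "B \<equiv> sectorB E base ws"
abbreviation P where "P \<equiv> poisson E base ws \<nu>"
abbreviation m where "m \<equiv> m_nu E base ws \<nu>"

lemma sets_B[measurable]: "B x \<in> sets \<nu>"
  using nu_sets by (auto intro: sigma_sets.Basic)

lemma ennreal_m: "ennreal (m x) = emeasure \<nu> (B x)"
  unfolding m_nu_def using nu_fin[of x] by (simp add: emeasure_eq_ennreal_measure less_top)

lemma m_pos: "0 < m x"
  using nu_pos[of x] ennreal_m[of x] by (metis ennreal_less_zero_iff)

lemma P_mult_m: "P f x * m x = (LINT \<omega>:B x|\<nu>. f \<omega>)"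
  unfolding poisson_def using m_pos[of x] by simp

lemma abs_P_mult_emeasure_le: "ennreal \<bar>P f x\<bar> * emeasure \<nu> (B x) \<le> (\<integral>\<^sup>+\<omega>. ennreal \<bar>f \<omega>\<bar> * indicator (B x) \<omega> \<partial>\<nu>)"
proof -
  have "ennreal \<bar>P f x\<bar> * emeasure \<nu> (B x) = ennreal \<bar>LINT \<omega>:B x|\<nu>. f \<omega>\<bar>"
    using m_pos[of x] P_mult_m[of f x] ennreal_m[of x]
    by (metis abs_mult abs_of_pos ennreal_mult' abs_ge_zero)
  also have "\<dots> \<le> (\<integral>\<^sup>+\<omega>. ennreal \<bar>f \<omega>\<bar> * indicator (B x) \<omega> \<partial>\<nu>)"
  proof (cases "integrable \<nu> (\<lambda>\<omega>. indicator (B x) \<omega> *\<^sub>R f \<omega>)")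
    case True
    have "ennreal \<bar>LINT \<omega>:B x|\<nu>. f \<omega>\<bar> \<le> (\<integral>\<^sup>+\<omega>. norm (indicator (B x) \<omega> *\<^sub>R f \<omega>) \<partial>\<nu>)"
      unfolding set_lebesgue_integral_def using integral_norm_bound_ennreal[OF True] by simp
    also have "\<dots> = (\<integral>\<^sup>+\<omega>. ennreal \<bar>f \<omega>\<bar> * indicator (B x) \<omega> \<partial>\<nu>)"
      by (intro nn_integral_cong) (simp add: indicator_def)
    finally show ?thesis .
  next
    case False
    then have "(LINT \<omega>:B x|\<nu>. f \<omega>) = 0" unfolding set_lebesgue_integral_def
      by (rule not_integrable_integral_eq)
    then show ?thesis by simp
  qed
  finally show ?thesis .
qed

lemma set_integrable_in_Lp:
  assumes p: "1 \<le> p" and f: "in_Lp \<nu> p f"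
  shows "set_integrable \<nu> (B x) f"
  unfolding set_integrable_def
proof (rule integrableI_bounded)
  have fm[measurable]: "f \<in> borel_measurable \<nu>" using f unfolding in_Lp_def by simp
  show "(\<lambda>\<omega>. indicator (B x) \<omega> *\<^sub>R f \<omega>) \<in> borel_measurable \<nu>" by measurable
  have "(\<integral>\<^sup>+\<omega>. ennreal (norm (indicator (B x) \<omega> *\<^sub>R f \<omega>)) \<partial>\<nu>)
      \<le> (\<integral>\<^sup>+\<omega>. indicator (B x) \<omega> + ennreal (\<bar>f \<omega>\<bar> powr p) \<partial>\<nu>)"
  proof (rule nn_integral_mono)
    fix \<omega>
    have "ennreal \<bar>f \<omega>\<bar> \<le> ennreal (1 + \<bar>f \<omega>\<bar> powr p)" using abs_le_1_plus_abs_powr[OF p] by (rule ennreal_leI)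
    also have "\<dots> = 1 + ennreal (\<bar>f \<omega>\<bar> powr p)" by (simp add: ennreal_plus)
    finally have *: "ennreal \<bar>f \<omega>\<bar> \<le> 1 + ennreal (\<bar>f \<omega>\<bar> powr p)" .
    show "ennreal (norm (indicator (B x) \<omega> *\<^sub>R f \<omega>)) \<le> indicator (B x) \<omega> + ennreal (\<bar>f \<omega>\<bar> powr p)"
      using * by (cases "\<omega> \<in> B x") auto
  qed
  also have "\<dots> = emeasure \<nu> (B x) + Lp_pow \<nu> p f"
    unfolding Lp_pow_def by (subst nn_integral_add) auto
  also have "\<dots> < \<infinity>" using nu_fin[of x] f unfolding in_Lp_def by simp
  finally show "(\<integral>\<^sup>+\<omega>. ennreal (norm (indicator (B x) \<omega> *\<^sub>R f \<omega>)) \<partial>\<nu>) < \<infinity>" .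
qed

lemma P_indicator:
  "P (indicator (B x)) y = measure \<nu> (B y \<inter> B x) / m y"
proof -
  have "(LINT \<omega>:B y|\<nu>. indicator (B x) \<omega>) = integral\<^sup>L \<nu> (indicator (B y \<inter> B x))"
    unfolding set_lebesgue_integral_def by (rule Bochner_Integration.integral_cong) (auto simp: indicator_def)
  also have "\<dots> = measure \<nu> (B y \<inter> B x)" using sets.sets_into_space[OF sets_B[of x]]
    by (simp add: Int_absorb2 inf.coboundedI2)
  finally show ?thesis unfolding poisson_def by simp
qed

lemma P_indicator_bounds: "0 \<le> P (indicator (B x)) y" "P (indicator (B x)) y \<le> 1"
proof -
  show "0 \<le> P (indicator (B x)) y" unfolding P_indicator using m_pos[of y] by simp
  have "measure \<nu> (B y \<inter> B x) \<le> measure \<nu> (B y)"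
    using nu_fin[of y] by (intro measure_mono_fmeasurable) (auto simp: fmeasurable_def)
  then show "P (indicator (B x)) y \<le> 1" unfolding P_indicator using m_pos[of y]
    by (simp add: m_nu_def)
qed

lemma P_indicator_eq_1: "vle E ws y x \<Longrightarrow> P (indicator (B x)) y = 1"
proof -
  assume "vle E ws y x"
  then have "B y \<inter> B x = B y" using sectorB_mono by blast
  then show ?thesis unfolding P_indicator using m_pos[of y] by (simp add: m_nu_def)
qed

lemma in_Lp_indicator: "in_Lp \<nu> p (indicator (B x))" "Lp_pow \<nu> p (indicator (B x)) = emeasure \<nu> (B x)"
proof -
  have "Lp_pow \<nu> p (indicator (B x)) = (\<integral>\<^sup>+\<omega>. indicator (B x) \<omega> \<partial>\<nu>)"
    unfolding Lp_pow_def by (intro nn_integral_cong) (simp add: indicator_def)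
  then show "Lp_pow \<nu> p (indicator (B x)) = emeasure \<nu> (B x)" by simp
  then show "in_Lp \<nu> p (indicator (B x))" unfolding in_Lp_def using nu_fin[of x] by simp
qed

lemma emeasure_B_sum_descendants:
  assumes "k \<le> level E ws x"
  shows "emeasure \<nu> (B x) = (\<Sum>y\<in>descendants k x. emeasure \<nu> (B y))"
proof -
  have "(\<Sum>y\<in>descendants k x. emeasure \<nu> (B y)) = emeasure \<nu> (\<Union>y\<in>descendants k x. B y)"
    by (rule sum_emeasure) (auto simp: disjoint_family_on_descendants finite_descendants[OF lf assms])
  then show ?thesis using sectorB_UN_descendants[OF assms] by simp
qed

lemma set_integral_B_sum_descendants:
  assumes k: "k \<le> level E ws x" and p: "1 \<le> p" and f: "in_Lp \<nu> p f"
  shows "(LINT \<omega>:B x|\<nu>. f \<omega>) = (\<Sum>y\<in>descendants k x. LINT \<omega>:B y|\<nu>. f \<omega>)"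
  using set_integral_finite_Union[OF finite_descendants[OF lf k] disjoint_family_on_descendants
      set_integrable_in_Lp[OF p f]] sectorB_UN_descendants[OF k] by simp

text \<open>The measure \<open>\<Sum>\<^sub>y m(y) \<delta>\<^sub>y\<close> on level \<open>k\<close>; the descendants of \<open>x\<close> at level \<open>k\<close> play the role of
  the sector \<open>B x\<close>, which turns the \<open>H\<^sup>p\<close> estimate into an instance of the abstract embedding.\<close>

definition level_measure :: "int \<Rightarrow> 'v measure" where
  "level_measure k = density (count_space {y. level E ws y = k}) (\<lambda>y. ennreal (m y))"

lemma sets_level_measure: "sets (level_measure k) = Pow {y. level E ws y = k}"
  unfolding level_measure_def by simp

lemma descendants_subset_level: "descendants k x \<subseteq> {y. level E ws y = k}"
  unfolding descendants_def by auto

lemma nn_integral_level_measure: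
  "(\<integral>\<^sup>+y. g y \<partial>level_measure k) = (\<integral>\<^sup>+y. ennreal (m y) * g y \<partial>count_space {y. level E ws y = k})"
  unfolding level_measure_def by (rule nn_integral_density) simp_all

lemma nn_integral_level_measure_descendants:
  assumes "k \<le> level E ws x"
  shows "(\<integral>\<^sup>+y. g y * indicator (descendants k x) y \<partial>level_measure k)
    = (\<Sum>y\<in>descendants k x. ennreal (m y) * g y)"
  unfolding nn_integral_level_measure mult.assoc[symmetric]
  by (simp add: nn_integral_count_space_indicator_subset[OF descendants_subset_level]
      nn_integral_count_space_finite[OF finite_descendants[OF lf assms]])

lemma emeasure_level_measure_descendants:
  assumes "k \<le> level E ws x"
  shows "emeasure (level_measure k) (descendants k x) = emeasure \<nu> (B x)"
proof -
  have "emeasure (level_measure k) (descendants k x) = (\<integral>\<^sup>+y. 1 * indicator (descendants k x) y \<partial>level_measure k)"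
    using descendants_subset_level[of k x] by (simp add: sets_level_measure)
  also have "\<dots> = (\<Sum>y\<in>descendants k x. emeasure \<nu> (B y))"
    using nn_integral_level_measure_descendants[OF assms, of "\<lambda>_. 1"] by (simp add: ennreal_m)
  finally show ?thesis using emeasure_B_sum_descendants[OF assms] by simp
qed

lemma abs_P_mult_level_measure_le:
  assumes k: "k \<le> level E ws x" and p: "1 \<le> p" and f: "in_Lp \<nu> p f"
  shows "ennreal \<bar>P f x\<bar> * emeasure (level_measure k) (descendants k x)
    \<le> (\<integral>\<^sup>+y. ennreal \<bar>P f y\<bar> * indicator (descendants k x) y \<partial>level_measure k)"
proof -
  have "\<bar>P f x\<bar> * m x = \<bar>LINT \<omega>:B x|\<nu>. f \<omega>\<bar>" using m_pos[of x] P_mult_m[of f x] by (metis abs_mult abs_of_pos)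
  also have "\<dots> = \<bar>\<Sum>y\<in>descendants k x. LINT \<omega>:B y|\<nu>. f \<omega>\<bar>"
    using set_integral_B_sum_descendants[OF k p f] by simp
  also have "\<dots> \<le> (\<Sum>y\<in>descendants k x. \<bar>LINT \<omega>:B y|\<nu>. f \<omega>\<bar>)" by (rule sum_abs)
  also have "\<dots> = (\<Sum>y\<in>descendants k x. m y * \<bar>P f y\<bar>)"
    by (intro sum.cong refl) (metis P_mult_m abs_mult abs_of_pos m_pos mult.commute)
  finally have "ennreal (\<bar>P f x\<bar> * m x) \<le> ennreal (\<Sum>y\<in>descendants k x. m y * \<bar>P f y\<bar>)"
    by (rule ennreal_leI)
  also have "\<dots> = (\<Sum>y\<in>descendants k x. ennreal (m y) * ennreal \<bar>P f y\<bar>)"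
    using m_pos by (simp add: sum_ennreal[symmetric] ennreal_mult less_imp_le)
  finally show ?thesis
    using m_pos[of x] by (simp add: emeasure_level_measure_descendants[OF k] ennreal_m[symmetric]
        ennreal_mult less_imp_le nn_integral_level_measure_descendants[OF k])
qed

lemma carleson_embedding_poisson:
  assumes C: "\<And>x. measT \<sigma> (sectorT E ws x) \<le> ennreal C * emeasure \<nu> (B x)"
    and f: "f \<in> borel_measurable \<nu>"
  shows "carleson_embedding (vle E ws) \<nu> B \<sigma> UNIV C (P f) f"
proof unfold_locales
  show "B x \<inter> B y = {}" if "\<not> vle E ws x y" "\<not> vle E ws y x" for x y
    using that by (rule sectorB_disjoint)
  show "emeasure \<nu> (B x) < \<infinity>" for x by (rule nu_fin)
qed (use C in \<open>auto intro: vle_trans vle_antisym vle_refl abs_P_mult_emeasure_le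
      simp: sectorT_def f nu_fin\<close>)

lemma carleson_embedding_level:
  assumes C: "\<And>x. measT \<sigma> (sectorT E ws x) \<le> ennreal C * emeasure \<nu> (B x)"
    and p: "1 \<le> p" and f: "in_Lp \<nu> p f"
  shows "carleson_embedding (vle E ws) (level_measure k) (descendants k) \<sigma> {x. k \<le> level E ws x} C (P f) (P f)"
proof unfold_locales
  fix x assume x: "x \<in> {x. k \<le> level E ws x}"
  have "measT \<sigma> {y \<in> {x. k \<le> level E ws x}. vle E ws y x} \<le> measT \<sigma> (sectorT E ws x)"
    unfolding sectorT_def by (rule measT_mono) auto
  then show "measT \<sigma> {y \<in> {x. k \<le> level E ws x}. vle E ws y x}
      \<le> ennreal C * emeasure (level_measure k) (descendants k x)"
    using C[of x] emeasure_level_measure_descendants[of k x] x by simp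
  show "emeasure (level_measure k) (descendants k x) < \<infinity>"
    using emeasure_level_measure_descendants[of k x] x nu_fin[of x] by simp
  show "ennreal \<bar>P f x\<bar> * emeasure (level_measure k) (descendants k x)
      \<le> (\<integral>\<^sup>+y. ennreal \<bar>P f y\<bar> * indicator (descendants k x) y \<partial>level_measure k)"
    using abs_P_mult_level_measure_le[OF _ p f] x by simp
next
  show "descendants k x \<inter> descendants k y = {}" if "\<not> vle E ws x y" "\<not> vle E ws y x" for x y
    using that by (rule descendants_disjoint)
qed (auto intro: vle_trans vle_antisym vle_refl simp: sets_level_measure level_measure_def descendants_def)

lemma carleson_Lp_estimate:
  assumes C: "0 < C" "\<And>x. measT \<sigma> (sectorT E ws x) \<le> ennreal C * emeasure \<nu> (B x)"
    and p: "1 < p" and f: "in_Lp \<nu> p f"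
  shows "LpT_pow \<sigma> p (P f) \<le> ennreal (2 powr p * 2 * dyadic_const p * C) * Lp_pow \<nu> p f"
proof -
  interpret carleson_embedding "vle E ws" \<nu> B \<sigma> UNIV C "P f" f
    using carleson_embedding_poisson[OF C(2)] f by (simp add: in_Lp_def)
  show ?thesis
    using strong_type_estimate[OF p] C(1)
    by (simp add: LpT_pow_def Lp_pow_def ennreal_mult sigma_nonneg)
qed

lemma carleson_weak_L1_estimate:
  assumes C: "0 < C" "\<And>x. measT \<sigma> (sectorT E ws x) \<le> ennreal C * emeasure \<nu> (B x)"
    and f: "in_Lp \<nu> 1 f"
  shows "weakL1T \<sigma> (P f) \<le> ennreal C * Lp_pow \<nu> 1 f"
proof -
  interpret carleson_embedding "vle E ws" \<nu> B \<sigma> UNIV C "P f" f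
    using carleson_embedding_poisson[OF C(2)] f by (simp add: in_Lp_def)
  show ?thesis
    unfolding weakL1T_def Lp_pow_def using weak_type_estimate by (auto intro!: SUP_least)
qed

lemma carleson_Hp_estimate_above_level:
  assumes C: "0 < C" "\<And>x. measT \<sigma> (sectorT E ws x) \<le> ennreal C * emeasure \<nu> (B x)"
    and p: "1 < p" and f: "in_Lp \<nu> p f"
  shows "(\<integral>\<^sup>+x. ennreal (\<bar>P f x\<bar> powr p) * ennreal (\<sigma> x) \<partial>count_space {x. k \<le> level E ws x})
    \<le> ennreal (2 powr p * 2 * dyadic_const p * C) * Hp_pow E base ws \<nu> p (P f)"
proof -
  interpret carleson_embedding "vle E ws" "level_measure k" "descendants k" \<sigma> "{x. k \<le> level E ws x}" C "P f" "P f"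
    using carleson_embedding_level[OF C(2) _ f] p by simp
  have "(\<integral>\<^sup>+y. ennreal (\<bar>P f y\<bar> powr p) \<partial>level_measure k)
      = (\<integral>\<^sup>+y. ennreal (\<bar>P f y\<bar> powr p * m y) \<partial>count_space {y. level E ws y = k})"
    unfolding nn_integral_level_measure
    by (intro nn_integral_cong) (simp add: ennreal_mult m_pos less_imp_le mult.commute)
  also have "\<dots> \<le> Hp_pow E base ws \<nu> p (P f)"
    unfolding Hp_pow_def by (rule SUP_upper) simp
  finally have level: "(\<integral>\<^sup>+y. ennreal (\<bar>P f y\<bar> powr p) \<partial>level_measure k) \<le> Hp_pow E base ws \<nu> p (P f)" .
  have "(\<integral>\<^sup>+x. ennreal (\<bar>P f x\<bar> powr p) * ennreal (\<sigma> x) \<partial>count_space {x. k \<le> level E ws x})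
      \<le> ennreal (2 powr p * 2 * dyadic_const p * C) * (\<integral>\<^sup>+y. ennreal (\<bar>P f y\<bar> powr p) \<partial>level_measure k)"
    by (rule strong_type_estimate[OF p]) (use C in simp)
  also have "\<dots> \<le> ennreal (2 powr p * 2 * dyadic_const p * C) * Hp_pow E base ws \<nu> p (P f)"
    by (rule mult_left_mono[OF level]) simp
  finally show ?thesis .
qed

text \<open>Every finite set of vertices lies above some level, so the previous estimate is uniform.\<close>

lemma carleson_Hp_estimate:
  assumes C: "0 < C" "\<And>x. measT \<sigma> (sectorT E ws x) \<le> ennreal C * emeasure \<nu> (B x)"
    and p: "1 < p" and f: "in_Lp \<nu> p f"
  shows "LpT_pow \<sigma> p (P f) \<le> ennreal (2 powr p * 2 * dyadic_const p * C) * Hp_pow E base ws \<nu> p (P f)"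
proof -
  have "LpT_pow \<sigma> p (P f) = (\<integral>\<^sup>+x. ennreal (\<bar>P f x\<bar> powr p) * ennreal (\<sigma> x) \<partial>count_space UNIV)"
    unfolding LpT_pow_def by (intro nn_integral_cong) (simp add: ennreal_mult sigma_nonneg)
  also have "\<dots> \<le> ennreal (2 powr p * 2 * dyadic_const p * C) * Hp_pow E base ws \<nu> p (P f)"
  proof (rule nn_integral_count_space_le_if_finite_sums_le)
    fix F :: "'v set" assume F: "finite F"
    define k where "k = Min (level E ws ` F)"
    have "F \<subseteq> {x. k \<le> level E ws x}" unfolding k_def using F by auto
    then show "(\<Sum>x\<in>F. ennreal (\<bar>P f x\<bar> powr p) * ennreal (\<sigma> x))
        \<le> ennreal (2 powr p * 2 * dyadic_const p * C) * Hp_pow E base ws \<nu> p (P f)"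
      using nn_integral_count_space_mono_set carleson_Hp_estimate_above_level[OF C p f, of k]
      by (simp add: nn_integral_count_space_finite[OF F, symmetric]) (blast intro: order_trans)
  qed
  finally show ?thesis .
qed

lemma weak_L1_estimate_imp_carleson:
  assumes C: "0 < C" and w: "\<And>f. in_Lp \<nu> 1 f \<Longrightarrow> weakL1T \<sigma> (P f) \<le> ennreal C * Lp_pow \<nu> 1 f"
  shows "carleson E base ws \<nu> \<sigma>"
  unfolding carleson_def
proof (intro exI[of _ "2 * C"] conjI allI)
  show "0 < 2 * C" using C by simp
  fix x
  have "sectorT E ws x \<subseteq> {y. 1/2 < \<bar>P (indicator (B x)) y\<bar>}"
    unfolding sectorT_def using P_indicator_eq_1 by auto
  then have "ennreal (1/2) * measT \<sigma> (sectorT E ws x) \<le> ennreal (1/2) * measT \<sigma> {y. 1/2 < \<bar>P (indicator (B x)) y\<bar>}"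
    by (intro mult_left_mono measT_mono) simp_all
  also have "\<dots> \<le> weakL1T \<sigma> (P (indicator (B x)))"
    unfolding weakL1T_def by (rule SUP_upper) simp
  also have "\<dots> \<le> ennreal C * emeasure \<nu> (B x)"
    using w[OF in_Lp_indicator(1)[of 1 x]] in_Lp_indicator(2)[of 1 x] by simp
  finally have half: "ennreal (1/2) * measT \<sigma> (sectorT E ws x) \<le> ennreal C * emeasure \<nu> (B x)" .
  have "ennreal 2 * ennreal (1/2) = 1" by (subst ennreal_mult[symmetric]) auto
  then have "measT \<sigma> (sectorT E ws x) = ennreal 2 * (ennreal (1/2) * measT \<sigma> (sectorT E ws x))"
    by (simp add: mult.assoc[symmetric])
  also have "\<dots> \<le> ennreal (2 * C) * emeasure \<nu> (B x)"
    using mult_left_mono[OF half, of "ennreal 2"] C by (simp add: ennreal_mult mult.assoc)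
  finally show "measT \<sigma> (sectorT E ws x) \<le> ennreal (2 * C) * emeasure \<nu> (B x)" .
qed

text \<open>For \<open>f = 1\<^bsub>B x\<^esub>\<close> the Poisson integral is \<open>\<nu>(B y \<inter> B x)/m(y) \<in> [0,1]\<close>; the sets \<open>B y\<close> on one
  level are disjoint, so every level contributes at most \<open>\<nu>(B x)\<close>.\<close>

lemma Hp_pow_P_indicator_le: "Hp_pow E base ws \<nu> 2 (P (indicator (B x))) \<le> emeasure \<nu> (B x)"
  unfolding Hp_pow_def
proof (intro SUP_least nn_integral_count_space_le_if_finite_sums_le)
  fix k :: int and F assume F: "finite F" "F \<subseteq> {y. level E ws y = k}"
  have "(\<Sum>y\<in>F. ennreal (\<bar>P (indicator (B x)) y\<bar> powr 2 * m y)) \<le> (\<Sum>y\<in>F. emeasure \<nu> (B y \<inter> B x))"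
  proof (rule sum_mono)
    fix y
    define a where "a = P (indicator (B x)) y"
    have a: "0 \<le> a" "a \<le> 1" unfolding a_def using P_indicator_bounds by auto
    then have "\<bar>a\<bar> powr 2 * m y \<le> a * m y"
      using m_pos[of y] by (simp add: power2_eq_square mult_left_le mult_right_mono)
    also have "a * m y = measure \<nu> (B y \<inter> B x)" unfolding a_def P_indicator using m_pos[of y] by simp
    also have "ennreal (measure \<nu> (B y \<inter> B x)) = emeasure \<nu> (B y \<inter> B x)"
      using nu_fin[of x] emeasure_mono[of "B y \<inter> B x" "B x" \<nu>]
      by (intro emeasure_eq_ennreal_measure[symmetric]) (auto simp: top_unique)
    finally show "ennreal (\<bar>P (indicator (B x)) y\<bar> powr 2 * m y) \<le> emeasure \<nu> (B y \<inter> B x)"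
      unfolding a_def by (simp add: ennreal_leI)
  qed
  also have "\<dots> = emeasure \<nu> (\<Union>y\<in>F. B y \<inter> B x)"
  proof (rule sum_emeasure)
    show "disjoint_family_on (\<lambda>y. B y \<inter> B x) F"
      unfolding disjoint_family_on_def using F(2) sectorB_disjoint_same_level by blast
  qed (use F in auto)
  also have "\<dots> \<le> emeasure \<nu> (B x)" by (rule emeasure_mono) auto
  finally show "(\<Sum>y\<in>F. ennreal (\<bar>P (indicator (B x)) y\<bar> powr 2 * m y)) \<le> emeasure \<nu> (B x)" .
qed

lemma Hp_estimate_imp_carleson:
  assumes C: "0 < C"
    and h: "\<And>f. in_Lp \<nu> 2 f \<Longrightarrow> LpT_pow \<sigma> 2 (P f) \<le> ennreal (C powr 2) * Hp_pow E base ws \<nu> 2 (P f)"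
  shows "carleson E base ws \<nu> \<sigma>"
  unfolding carleson_def
proof (intro exI[of _ "C powr 2"] conjI allI)
  show "0 < C powr 2" using C by simp
  fix x
  have "measT \<sigma> (sectorT E ws x)
      = (\<integral>\<^sup>+y. ennreal (\<bar>P (indicator (B x)) y\<bar> powr 2 * \<sigma> y) \<partial>count_space (sectorT E ws x))"
    unfolding measT_def sectorT_def by (intro nn_integral_cong) (simp add: P_indicator_eq_1)
  also have "\<dots> \<le> LpT_pow \<sigma> 2 (P (indicator (B x)))"
    unfolding LpT_pow_def by (rule nn_integral_count_space_mono_set) simp
  also have "\<dots> \<le> ennreal (C powr 2) * Hp_pow E base ws \<nu> 2 (P (indicator (B x)))"
    using h in_Lp_indicator[of 2 x] by simp
  also have "\<dots> \<le> ennreal (C powr 2) * emeasure \<nu> (B x)"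
    by (intro mult_left_mono Hp_pow_P_indicator_le) simp
  finally show "measT \<sigma> (sectorT E ws x) \<le> ennreal (C powr 2) * emeasure \<nu> (B x)" .
qed

lemma carleson_iff_Lp_and_weak_L1:
  "carleson E base ws \<nu> \<sigma> \<longleftrightarrow>
    (\<forall>p>1. \<exists>C>0. \<forall>f. in_Lp \<nu> p f \<longrightarrow> LpT_pow \<sigma> p (P f) \<le> ennreal (C powr p) * Lp_pow \<nu> p f)
    \<and> (\<exists>C>0. \<forall>f. in_Lp \<nu> 1 f \<longrightarrow> weakL1T \<sigma> (P f) \<le> ennreal C * Lp_pow \<nu> 1 f)"
proof (intro iffI conjI allI impI)
  fix p :: real assume "carleson E base ws \<nu> \<sigma>" and p: "1 < p"
  then obtain C where C: "0 < C" "\<And>x. measT \<sigma> (sectorT E ws x) \<le> ennreal C * emeasure \<nu> (B x)"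
    unfolding carleson_def by blast
  show "\<exists>C>0. \<forall>f. in_Lp \<nu> p f \<longrightarrow> LpT_pow \<sigma> p (P f) \<le> ennreal (C powr p) * Lp_pow \<nu> p f"
    by (rule ex_powr_bound[OF _ _ carleson_Lp_estimate[OF C p]]) (use C p dyadic_const_pos[OF p] in auto)
next
  assume "carleson E base ws \<nu> \<sigma>"
  then show "\<exists>C>0. \<forall>f. in_Lp \<nu> 1 f \<longrightarrow> weakL1T \<sigma> (P f) \<le> ennreal C * Lp_pow \<nu> 1 f"
    unfolding carleson_def using carleson_weak_L1_estimate by blast
qed (auto intro: weak_L1_estimate_imp_carleson)

lemma carleson_iff_Hp:
  "carleson E base ws \<nu> \<sigma> \<longleftrightarrow>
    (\<forall>p>1. \<exists>C>0. \<forall>f. in_Lp \<nu> p f \<longrightarrow> LpT_pow \<sigma> p (P f) \<le> ennreal (C powr p) * Hp_pow E base ws \<nu> p (P f))"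
proof (intro iffI allI impI)
  fix p :: real assume "carleson E base ws \<nu> \<sigma>" and p: "1 < p"
  then obtain C where C: "0 < C" "\<And>x. measT \<sigma> (sectorT E ws x) \<le> ennreal C * emeasure \<nu> (B x)"
    unfolding carleson_def by blast
  show "\<exists>C>0. \<forall>f. in_Lp \<nu> p f \<longrightarrow> LpT_pow \<sigma> p (P f) \<le> ennreal (C powr p) * Hp_pow E base ws \<nu> p (P f)"
    by (rule ex_powr_bound[OF _ _ carleson_Hp_estimate[OF C p]]) (use C p dyadic_const_pos[OF p] in auto)
next
  assume "\<forall>p>1. \<exists>C>0. \<forall>f. in_Lp \<nu> p f \<longrightarrow> LpT_pow \<sigma> p (P f) \<le> ennreal (C powr p) * Hp_pow E base ws \<nu> p (P f)"
  then obtain C where "0 < C"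
    "\<And>f. in_Lp \<nu> 2 f \<Longrightarrow> LpT_pow \<sigma> 2 (P f) \<le> ennreal (C powr 2) * Hp_pow E base ws \<nu> 2 (P f)"
    by (auto dest: spec[where x=2])
  then show "carleson E base ws \<nu> \<sigma>" by (rule Hp_estimate_imp_carleson)
qed

end

theorem theorem2p4:
  fixes E :: "'v \<Rightarrow> 'v \<Rightarrow> bool" and base :: 'v and ws :: "nat \<Rightarrow> 'v"
    and \<nu> :: "(nat \<Rightarrow> 'v) measure" and \<sigma> :: "'v \<Rightarrow> real"
  assumes tree: "is_tree E"
    and lf: "locally_finite E"
    and ws_ray: "ray E ws" and ws0: "ws 0 = base"
    and nu_space: "space \<nu> = bdry E base ws"
    and nu_sets: "sets \<nu> = sigma_sets (bdry E base ws) (range (sectorB E base ws))"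
    and nu_pos: "\<And>x. 0 < emeasure \<nu> (sectorB E base ws x)"
    and nu_fin: "\<And>x. emeasure \<nu> (sectorB E base ws x) < \<infinity>"
    and sigma_nonneg: "\<And>x. 0 \<le> \<sigma> x"
  shows "(carleson E base ws \<nu> \<sigma> \<longleftrightarrow>
           ((\<forall>p>1. \<exists>C>0. \<forall>f. in_Lp \<nu> p f \<longrightarrow>
                LpT_pow \<sigma> p (poisson E base ws \<nu> f) \<le> ennreal (C powr p) * Lp_pow \<nu> p f)
            \<and> (\<exists>C>0. \<forall>f. in_Lp \<nu> 1 f \<longrightarrow>
                weakL1T \<sigma> (poisson E base ws \<nu> f) \<le> ennreal C * Lp_pow \<nu> 1 f)))
       \<and> (carleson E base ws \<nu> \<sigma> \<longleftrightarrow>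
           (\<forall>p>1. \<exists>C>0. \<forall>f. in_Lp \<nu> p f \<longrightarrow>
                LpT_pow \<sigma> p (poisson E base ws \<nu> f)
                  \<le> ennreal (C powr p) * Hp_pow E base ws \<nu> p (poisson E base ws \<nu> f)))"
proof -
  interpret poisson_setting E ws base \<nu> \<sigma>
    using tree ws_ray lf nu_sets nu_pos nu_fin sigma_nonneg by unfold_locales auto
  show ?thesis using carleson_iff_Lp_and_weak_L1 carleson_iff_Hp by blast
qed

end
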